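(* Assume that for every $t$ the local noises $w^1_t,\ldots,w^n_t$ are exchangeable, and let $c_{\max}$ be an upper bound on the per-step cost $c$. Given $\varepsilon>0$, let $k=k(\varepsilon)\in\mathbb{N}$ satisfy $k\ge \log\!\big(\tfrac{(1-\gamma)\varepsilon}{2c_{\max}}\big)/\log(\gamma)$. Fix an arbitrary $m^\ast\in\mathcal{M}(n)$ and let $\tilde V_k:\mathcal{M}(n)\times\{0,1,\ldots,k\}\to\mathbb{R}$ be any solution of $\tilde V_k(x,y)=\min(\tilde V^0_k(x,y),\tilde V^1_k(x,y))$, where $$\tilde V^0_k(x,y)=\sum_{m\in\mathcal{M}(n)}c\big(m,h(T_{\mathsf m}^y(\cdot,x)),0\big)T_{\mathsf m}^y(m,x)+\gamma\big(\mathbb{1}\{y<k\}\tilde V_k(x,y+1)+\mathbb{1}\{y=k\}\tilde V_k(m^\ast,0)\big),$$ $$\tilde V^1_k(x,y)=\sum_{m\in\mathcal{M}(n)}c\big(m,h(T_{\mathsf m}^y(\cdot,x)),1\big)T_{\mathsf m}^y(m,x)+(1-q)\gamma\big(\mathbb{1}\{y<k\}\tilde V_k(x,y+1)+\mathbb{1}\{y=k\}\tilde V_k(m^\ast,0)\big)+q\gamma\sum_{m'\in\mathcal{M}(n)}T_{\mathsf m}^{y+1}(m',x)\tilde V_k(m',0).$$ Then the strategy $g^\ast_\varepsilon(x,y)=0$ if $\tilde V^0_k(x,y)\le\tilde V^1_k(x,y)$ and $g^\ast_\varepsilon(x,y)=1$ otherwise (applied to $(x_t,y_t)$) is $\varepsilon$-optimal: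 $J(g^\ast_\varepsilon)\le J(g)+\varepsilon$ for every strategy $g$.
   Context: Setting: $n\in\mathbb{N}$ nodes, finite state set $\mathcal{S}\subset\mathbb{R}$, finite noise set $\mathcal{W}\subset\mathbb{R}$, time $t\in\mathbb{N}=\{1,2,\ldots\}$. Node $i$ has state $s^i_t\in\mathcal{S}$; the empirical distribution is $m_t(s)=\frac1n\sum_{i=1}^n\mathbb{1}\{s^i_t=s\}$, taking values in $\mathcal{M}(n)$, the set of probability vectors on $\mathcal{S}$ with entries in $\{0,\frac1n,\ldots,1\}$. States evolve as $s^i_{t+1}=f(s^i_t,m_t,w^i_t)$ with local noise $w^i_t\in\mathcal{W}$. A decision maker picks $a_t\in\{0,1\}$ ($1$ = collect data). Observations $o_t\in\mathcal{O}=\mathcal{M}(n)\cup\{\mathtt{blank}\}$: $o_1=m_1$; if $a_t=0$ then $o_{t+1}=\mathtt{blank}$; if $a_t=1$ then $o_{t+1}=m_{t+1}$ with probability $q\in[0,1]$ and $o_{t+1}=\mathtt{blank}$ with probability $1-q$. A strategy is $g=(g_1,g_2,\ldots)$, $a_t=g_t(o_{1:t},a_{1:t-1})$. Initial states, noise vectors, and the Bernoulli($q$) credibility variables are mutually independent with finite variances. The estimate is $\hat m_t=h(\mathbb{P}(m_t\mid o_{1:t},a_{1:t-1}))\in\mathcal{M}(n)$ for a fixed function $h$. Per-step cost $c:\mathcal{M}(n)^2\times\{0,1\}\to\mathbb{R}_{\ge0}$ at $(m_t,\hat m_t,a_t)$; discount $\gamma\in(0,1)$; $J(g)=\mathbb{E}^g[\sum_{t=1}^\infty\gamma^{t-1}c(m_t,\hat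 m_t,a_t)]$. Under exchangeable noises $m_t$ is a time-homogeneous Markov chain with transition matrix $T_{\mathsf m}(m',m)=\mathbb{P}(m_{t+1}=m'\mid m_t=m)$; $T_{\mathsf m}^y$ is its $y$-th power. $x_t$ is the last non-blank observation up to time $t$ and $y_t$ the number of blank observations since then, $(x_1,y_1)=(m_1,0)$. *)

theory Defs
  imports "HOL-Probability.Probability"
begin

definition emp :: "nat \<Rightarrow> real list \<Rightarrow> (real \<Rightarrow> real)" where
  "emp n s = (\<lambda>x. real (card {i. i < n \<and> s ! i = x}) / real n)"

(* M(n): probability vectors on S with entries in {0,1/n,...,1}; represented as
   functions real => real vanishing outside S *)
definition Mset :: "nat \<Rightarrow> real set \<Rightarrow> (real \<Rightarrow> real) set" where
  "Mset n S = {m. (\<forall>x. x \<notin> S \<longrightarrow> m x = 0) \<and>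
                  (\<forall>x\<in>S. \<exists>j\<le>n. m x = real j / real n) \<and>
                  (\<Sum>x\<in>S. m x) = 1}"

definition is_belief :: "nat \<Rightarrow> real set \<Rightarrow> ((real \<Rightarrow> real) \<Rightarrow> real) \<Rightarrow> bool" where
  "is_belief n S b \<longleftrightarrow> (\<forall>m. 0 \<le> b m) \<and> (\<forall>m. m \<notin> Mset n S \<longrightarrow> b m = 0) \<and>
                         (\<Sum>m\<in>Mset n S. b m) = 1"

(* T_m(m', m) = P(m_{t+1} = m' | m_t = m), computed from any state vector
   with empirical distribution m (well defined under exchangeable noises) *)
definition Tm :: "nat \<Rightarrow> real set \<Rightarrow> (real \<Rightarrow> (real \<Rightarrow> real) \<Rightarrow> real \<Rightarrow> real) \<Rightarrow>
                  real list pmf \<Rightarrow> (real \<Rightarrow> real) \<Rightarrow> (real \<Rightarrow> real) \<Rightarrow> real" where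
  "Tm n S f PW m' m =
     (let s = (SOME s. length s = n \<and> set s \<subseteq> S \<and> emp n s = m)
      in measure_pmf.prob PW {w. emp n (map (\<lambda>i. f (s ! i) m (w ! i)) [0..<n]) = m'})"

fun Tpow :: "nat \<Rightarrow> real set \<Rightarrow> (real \<Rightarrow> (real \<Rightarrow> real) \<Rightarrow> real \<Rightarrow> real) \<Rightarrow>
             real list pmf \<Rightarrow> nat \<Rightarrow> (real \<Rightarrow> real) \<Rightarrow> (real \<Rightarrow> real) \<Rightarrow> real" where
  "Tpow n S f PW 0 m' x = (if m' = x then 1 else 0)"
| "Tpow n S f PW (Suc y) m' x =
     (\<Sum>m''\<in>Mset n S. Tm n S f PW m' m'' * Tpow n S f PW y m'' x)"

fun rep_pmf :: "nat \<Rightarrow> 'a pmf \<Rightarrow> 'a list pmf" where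
  "rep_pmf 0 p = return_pmf []"
| "rep_pmf (Suc k) p = bind_pmf p (\<lambda>x. map_pmf (\<lambda>xs. x # xs) (rep_pmf k p))"

(* outcome (s_1, [w_1,...,w_j], [b_1,...,b_j]): initial state vector, noise vectors,
   Bernoulli(q) credibility variables (b_t decides whether o_{t+1} is non-blank
   when a_t = 1); all mutually independent *)
type_synonym outcome = "real list \<times> real list list \<times> bool list"

definition prefix_pmf :: "real list pmf \<Rightarrow> real list pmf \<Rightarrow> real \<Rightarrow> nat \<Rightarrow> outcome pmf" where
  "prefix_pmf P0 PW q j = pair_pmf P0 (pair_pmf (rep_pmf j PW) (rep_pmf j (bernoulli_pmf q)))"

(* state vector s_{j+1} (0-indexed j) *)
fun state_at :: "nat \<Rightarrow> (real \<Rightarrow> (real \<Rightarrow> real) \<Rightarrow> real \<Rightarrow> real) \<Rightarrow> outcome \<Rightarrow> nat \<Rightarrow> real list" where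
  "state_at n f \<omega> 0 = fst \<omega>"
| "state_at n f \<omega> (Suc j) =
     (let s = state_at n f \<omega> j
      in map (\<lambda>i. f (s ! i) (emp n s) (fst (snd \<omega>) ! j ! i)) [0..<n])"

(* m_{j+1} *)
definition mf :: "nat \<Rightarrow> (real \<Rightarrow> (real \<Rightarrow> real) \<Rightarrow> real \<Rightarrow> real) \<Rightarrow> outcome \<Rightarrow> nat \<Rightarrow> (real \<Rightarrow> real)" where
  "mf n f \<omega> j = emp n (state_at n f \<omega> j)"

type_synonym obs = "(real \<Rightarrow> real) option"   (* None = blank *)

(* strategy: g t o_{1:t} a_{1:t-1} = a_t *)
type_synonym strategy = "nat \<Rightarrow> obs list \<Rightarrow> nat list \<Rightarrow> nat"

definition strategies :: "strategy set" where
  "strategies = {g. \<forall>t os as. g t os as \<in> {0, 1}}"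

(* run ... j = ([o_1,...,o_{j+1}], [a_1,...,a_{j+1}]) *)
fun run :: "nat \<Rightarrow> (real \<Rightarrow> (real \<Rightarrow> real) \<Rightarrow> real \<Rightarrow> real) \<Rightarrow> strategy \<Rightarrow> outcome \<Rightarrow> nat \<Rightarrow>
            obs list \<times> nat list" where
  "run n f g \<omega> 0 = ([Some (mf n f \<omega> 0)], [g 1 [Some (mf n f \<omega> 0)] []])"
| "run n f g \<omega> (Suc j) =
     (let (os, as) = run n f g \<omega> j;
          o' = (if last as = 1 \<and> snd (snd \<omega>) ! j then Some (mf n f \<omega> (Suc j)) else None);
          os' = os @ [o']
      in (os', as @ [g (j + 2) os' as]))"

(* P(m_{j+1} = . | o_{1:j+1} = os, a_{1:j} = as) *)
definition belief :: "nat \<Rightarrow> (real \<Rightarrow> (real \<Rightarrow> real) \<Rightarrow> real \<Rightarrow> real) \<Rightarrow> real list pmf \<Rightarrow>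
    real list pmf \<Rightarrow> real \<Rightarrow> strategy \<Rightarrow> nat \<Rightarrow> obs list \<Rightarrow> nat list \<Rightarrow> ((real \<Rightarrow> real) \<Rightarrow> real)" where
  "belief n f P0 PW q g j os as =
     (\<lambda>m. measure_pmf.prob (prefix_pmf P0 PW q j)
            {\<omega>. mf n f \<omega> j = m \<and> fst (run n f g \<omega> j) = os \<and> butlast (snd (run n f g \<omega> j)) = as}
         / measure_pmf.prob (prefix_pmf P0 PW q j)
            {\<omega>. fst (run n f g \<omega> j) = os \<and> butlast (snd (run n f g \<omega> j)) = as})"

(* E[c(m_t, \<hat>m_t, a_t)] for t = j+1 *)
definition exp_cost :: "nat \<Rightarrow> (real \<Rightarrow> (real \<Rightarrow> real) \<Rightarrow> real \<Rightarrow> real) \<Rightarrow> real list pmf \<Rightarrow>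
    real list pmf \<Rightarrow> real \<Rightarrow> (((real \<Rightarrow> real) \<Rightarrow> real) \<Rightarrow> (real \<Rightarrow> real)) \<Rightarrow>
    ((real \<Rightarrow> real) \<Rightarrow> (real \<Rightarrow> real) \<Rightarrow> nat \<Rightarrow> real) \<Rightarrow> strategy \<Rightarrow> nat \<Rightarrow> real" where
  "exp_cost n f P0 PW q h c g j =
     measure_pmf.expectation (prefix_pmf P0 PW q j)
       (\<lambda>\<omega>. let (os, as) = run n f g \<omega> j
             in c (mf n f \<omega> j) (h (belief n f P0 PW q g j os (butlast as))) (last as))"

(* J(g) = E[sum_t gamma^{t-1} c(m_t, \<hat>m_t, a_t)] = sum_t gamma^{t-1} E[c(...)] *)
definition Jcost :: "nat \<Rightarrow> (real \<Rightarrow> (real \<Rightarrow> real) \<Rightarrow> real \<Rightarrow> real) \<Rightarrow> real list pmf \<Rightarrow>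
    real list pmf \<Rightarrow> real \<Rightarrow> (((real \<Rightarrow> real) \<Rightarrow> real) \<Rightarrow> (real \<Rightarrow> real)) \<Rightarrow>
    ((real \<Rightarrow> real) \<Rightarrow> (real \<Rightarrow> real) \<Rightarrow> nat \<Rightarrow> real) \<Rightarrow> real \<Rightarrow> strategy \<Rightarrow> real" where
  "Jcost n f P0 PW q h c \<gamma> g = (\<Sum>j. \<gamma> ^ j * exp_cost n f P0 PW q h c g j)"

definition xof :: "obs list \<Rightarrow> (real \<Rightarrow> real)" where
  "xof os = the (last (filter (\<lambda>ob. ob \<noteq> None) os))"

definition yof :: "obs list \<Rightarrow> nat" where
  "yof os = length (takeWhile (\<lambda>ob. ob = None) (rev os))"

definition V0 :: "nat \<Rightarrow> real set \<Rightarrow> (real \<Rightarrow> (real \<Rightarrow> real) \<Rightarrow> real \<Rightarrow> real) \<Rightarrow> real list pmf \<Rightarrow>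
    (((real \<Rightarrow> real) \<Rightarrow> real) \<Rightarrow> (real \<Rightarrow> real)) \<Rightarrow>
    ((real \<Rightarrow> real) \<Rightarrow> (real \<Rightarrow> real) \<Rightarrow> nat \<Rightarrow> real) \<Rightarrow> real \<Rightarrow> nat \<Rightarrow> (real \<Rightarrow> real) \<Rightarrow>
    ((real \<Rightarrow> real) \<Rightarrow> nat \<Rightarrow> real) \<Rightarrow> (real \<Rightarrow> real) \<Rightarrow> nat \<Rightarrow> real" where
  "V0 n S f PW h c \<gamma> k mstar V x y =
     (\<Sum>m\<in>Mset n S. c m (h (\<lambda>m'. Tpow n S f PW y m' x)) 0 * Tpow n S f PW y m x)
     + \<gamma> * ((if y < k then 1 else 0) * V x (y + 1) + (if y = k then 1 else 0) * V mstar 0)"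

definition V1 :: "nat \<Rightarrow> real set \<Rightarrow> (real \<Rightarrow> (real \<Rightarrow> real) \<Rightarrow> real \<Rightarrow> real) \<Rightarrow> real list pmf \<Rightarrow>
    (((real \<Rightarrow> real) \<Rightarrow> real) \<Rightarrow> (real \<Rightarrow> real)) \<Rightarrow>
    ((real \<Rightarrow> real) \<Rightarrow> (real \<Rightarrow> real) \<Rightarrow> nat \<Rightarrow> real) \<Rightarrow> real \<Rightarrow> real \<Rightarrow> nat \<Rightarrow> (real \<Rightarrow> real) \<Rightarrow>
    ((real \<Rightarrow> real) \<Rightarrow> nat \<Rightarrow> real) \<Rightarrow> (real \<Rightarrow> real) \<Rightarrow> nat \<Rightarrow> real" where
  "V1 n S f PW h c \<gamma> q k mstar V x y =
     (\<Sum>m\<in>Mset n S. c m (h (\<lambda>m'. Tpow n S f PW y m' x)) 1 * Tpow n S f PW y m x)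
     + (1 - q) * \<gamma> * ((if y < k then 1 else 0) * V x (y + 1) + (if y = k then 1 else 0) * V mstar 0)
     + q * \<gamma> * (\<Sum>m'\<in>Mset n S. Tpow n S f PW (y + 1) m' x * V m' 0)"

end

theory Submission
  imports Defs
begin

(*
  Under exchangeable noise the law of m_{t+1} given the state vector depends only on m_t, through
  T_m: relabel the nodes. Consequently, whatever the strategy, the posterior of m_t given the
  history is T_m^{y_t}(., x_t): a non-blank observation reveals m_t, and each blank one pushes the
  prediction one step further. The expected stage cost is thus a function of (x_t, y_t, a_t), and
  the truncated equation for V is the Bellman equation of this fully observed problem, except that
  it resets to (m*, 0) when y reaches k without an observation.

  Let L_t and U_t be the expectations of V(x_t, y_t) on the event that y has never exceeded k,
  completed by 0 resp. by c_max/(1-gamma) off that event, and let e_t be the probability that the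
  horizon is left at step t. Comparing with the Bellman equation gives, for every strategy,
  L_t <= E c_t + gamma L_{t+1} + gamma V(m*,0) e_t, and for the greedy strategy
  E c_t + gamma U_{t+1} <= U_t + gamma (c_max/(1-gamma) - V(m*,0)) e_t. The horizon is left at
  most once and not before time k, so the discounted e_t sum to at most gamma^k; telescoping and
  L_1 = U_1 give J(g_eps) <= J(g) + gamma^k c_max/(1-gamma), and this is at most eps/2 by the
  choice of k.
*)

section \<open>Integrals over finite PMFs and discounted sums\<close>

lemma measure_pmf_prob_eq_integral_of_bool:
  "measure_pmf.prob N A = (\<integral>x. of_bool (x \<in> A) \<partial>N)"
proof -
  have "(\<lambda>x. of_bool (x \<in> A) :: real) = indicator A"
    by (simp add: fun_eq_iff indicator_def)
  then show ?thesis by simp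
qed

lemma integral_pmf_eq_sum_values:
  fixes H :: "'b \<Rightarrow> real"
  assumes "finite A" and "\<And>x. x \<in> set_pmf N \<Longrightarrow> X x \<in> A"
  shows "(\<integral>x. H (X x) \<partial>N) = (\<Sum>v\<in>A. H v * measure_pmf.prob N {x. X x = v})"
proof -
  have "(\<integral>x. H (X x) \<partial>N) = (\<integral>v. H v \<partial>map_pmf X N)" by simp
  also have "\<dots> = (\<Sum>v\<in>A. H v * pmf (map_pmf X N) v)"
    by (rule integral_measure_pmf_real) (use assms in auto)
  also have "\<dots> = (\<Sum>v\<in>A. H v * measure_pmf.prob N {x. X x = v})"
    by (simp add: pmf_map vimage_def)
  finally show ?thesis .
qed

lemma integral_pair_pmf_finite:
  fixes f :: "'a \<times> 'b \<Rightarrow> real"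
  assumes "finite (set_pmf A)" "finite (set_pmf B)"
  shows "(\<integral>z. f z \<partial>pair_pmf A B) = (\<integral>a. (\<integral>b. f (a, b) \<partial>B) \<partial>A)"
proof -
  have "(\<integral>z. f z \<partial>pair_pmf A B) = (\<Sum>z\<in>set_pmf A \<times> set_pmf B. f z * pmf (pair_pmf A B) z)"
    by (rule integral_measure_pmf_real) (auto simp: assms)
  also have "\<dots> = (\<Sum>z\<in>set_pmf A \<times> set_pmf B. case z of (a, b) \<Rightarrow> f (a, b) * (pmf A a * pmf B b))"
    by (rule sum.cong) (auto simp: pmf_pair)
  also have "\<dots> = (\<Sum>a\<in>set_pmf A. (\<Sum>b\<in>set_pmf B. f (a, b) * pmf B b) * pmf A a)"
    by (simp add: sum.cartesian_product sum_distrib_left sum_distrib_right mult_ac)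
  also have "\<dots> = (\<Sum>a\<in>set_pmf A. (\<integral>b. f (a, b) \<partial>B) * pmf A a)"
    by (rule sum.cong[OF refl], subst integral_measure_pmf_real[where A="set_pmf B"]) (auto simp: assms)
  also have "\<dots> = (\<integral>a. (\<integral>b. f (a, b) \<partial>B) \<partial>A)"
    by (rule integral_measure_pmf_real[symmetric]) (auto simp: assms)
  finally show ?thesis .
qed

lemma set_pmf_rep_pmf: "set_pmf (rep_pmf k p) = {xs. length xs = k \<and> set xs \<subseteq> set_pmf p}"
proof (induction k)
  case (Suc k)
  show ?case
  proof
    show "{xs. length xs = Suc k \<and> set xs \<subseteq> set_pmf p} \<subseteq> set_pmf (rep_pmf (Suc k) p)"
    proof
      fix xs assume "xs \<in> {xs. length xs = Suc k \<and> set xs \<subseteq> set_pmf p}"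
      then obtain x xs' where "xs = x # xs'" "length xs' = k" "x \<in> set_pmf p" "set xs' \<subseteq> set_pmf p"
        by (cases xs) auto
      then show "xs \<in> set_pmf (rep_pmf (Suc k) p)" using Suc by auto
    qed
  qed (use Suc in auto)
qed auto

lemma rep_pmf_Suc_snoc: "rep_pmf (Suc k) p = map_pmf (\<lambda>(xs, x). xs @ [x]) (pair_pmf (rep_pmf k p) p)"
proof (induction k)
  case 0 then show ?case
    by (simp add: pair_pmf_def map_pmf_def bind_assoc_pmf bind_return_pmf)
next
  case (Suc k)
  have "rep_pmf (Suc (Suc k)) p = bind_pmf p (\<lambda>x. map_pmf ((#) x) (rep_pmf (Suc k) p))"
    by simp
  also have "\<dots> = bind_pmf p (\<lambda>x. map_pmf ((#) x) (map_pmf (\<lambda>(xs, x). xs @ [x]) (pair_pmf (rep_pmf k p) p)))"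
    by (simp only: Suc)
  also have "\<dots> = map_pmf (\<lambda>(xs, x). xs @ [x]) (pair_pmf (rep_pmf (Suc k) p) p)"
    by (simp add: pair_pmf_def map_pmf_def bind_assoc_pmf bind_return_pmf)
  finally show ?case .
qed

lemma discounted_telescope_lower:
  fixes A c d :: "nat \<Rightarrow> real" and \<gamma> K :: real
  assumes step: "\<And>t. A t \<le> c t + \<gamma> * A (Suc t) + \<gamma> * K * d t" and "0 \<le> \<gamma>"
  shows "A 0 \<le> (\<Sum>t<N. \<gamma> ^ t * c t) + \<gamma> ^ N * A N + K * (\<Sum>t<N. \<gamma> ^ Suc t * d t)"
proof (induction N)
  case (Suc N)
  have "\<gamma> ^ N * A N \<le> \<gamma> ^ N * (c N + \<gamma> * A (Suc N) + \<gamma> * K * d N)"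
    using step \<open>0 \<le> \<gamma>\<close> by (simp add: mult_left_mono)
  then show ?case using Suc by (simp add: algebra_simps)
qed simp

lemma discounted_telescope_upper:
  fixes U c d :: "nat \<Rightarrow> real" and \<gamma> K :: real
  assumes step: "\<And>t. c t + \<gamma> * U (Suc t) \<le> U t + \<gamma> * K * d t" and "0 \<le> \<gamma>"
  shows "(\<Sum>t<N. \<gamma> ^ t * c t) + \<gamma> ^ N * U N \<le> U 0 + K * (\<Sum>t<N. \<gamma> ^ Suc t * d t)"
proof (induction N)
  case (Suc N)
  have "\<gamma> ^ N * (c N + \<gamma> * U (Suc N)) \<le> \<gamma> ^ N * (U N + \<gamma> * K * d N)"
    using step \<open>0 \<le> \<gamma>\<close> by (simp add: mult_left_mono)
  then show ?case using Suc by (simp add: algebra_simps)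
qed simp

lemma discounted_late_increments_le:
  fixes e d :: "nat \<Rightarrow> real" and \<gamma> :: real
  assumes incr: "\<And>t. e (Suc t) = e t + d t" and d_nonneg: "\<And>t. 0 \<le> d t"
    and late: "\<And>t. Suc t < k \<Longrightarrow> d t = 0"
    and "0 \<le> e 0" "e N \<le> 1" and "0 \<le> \<gamma>" "\<gamma> \<le> 1"
  shows "(\<Sum>t<N. \<gamma> ^ Suc t * d t) \<le> \<gamma> ^ k"
proof -
  have "\<gamma> ^ Suc t * d t \<le> \<gamma> ^ k * d t" for t
  proof (cases "Suc t < k")
    case False
    then have "\<gamma> ^ Suc t \<le> \<gamma> ^ k" using assms by (intro power_decreasing) auto
    then show ?thesis using d_nonneg by (rule mult_right_mono)
  qed (simp add: late)
  then have "(\<Sum>t<N. \<gamma> ^ Suc t * d t) \<le> \<gamma> ^ k * (\<Sum>t<N. d t)"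
    by (simp add: sum_distrib_left sum_mono)
  also have "(\<Sum>t<N. d t) = e N - e 0" by (induction N) (auto simp: incr)
  also have "\<gamma> ^ k * (e N - e 0) \<le> \<gamma> ^ k * 1" using assms by (intro mult_left_mono) auto
  finally show ?thesis by simp
qed

lemma geometric_tail_le_half:
  fixes \<gamma> cmax \<epsilon> :: real
  assumes "0 < \<gamma>" "\<gamma> < 1" "0 \<le> cmax" "0 < \<epsilon>"
    and k: "real k \<ge> ln ((1 - \<gamma>) * \<epsilon> / (2 * cmax)) / ln \<gamma>"
  shows "cmax / (1 - \<gamma>) * \<gamma> ^ k \<le> \<epsilon> / 2"
proof (cases "cmax = 0")
  case False
  define a where "a = (1 - \<gamma>) * \<epsilon> / (2 * cmax)"
  have "cmax > 0" "a > 0" using False assms by (auto simp: a_def)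
  have "real k * ln \<gamma> \<le> ln a"
    using k \<open>0 < \<gamma>\<close> \<open>\<gamma> < 1\<close> unfolding a_def by (simp add: neg_divide_le_eq)
  then have "\<gamma> ^ k \<le> a"
    using \<open>a > 0\<close> \<open>0 < \<gamma>\<close> by (simp add: ln_realpow[symmetric] ln_le_cancel_iff)
  then have "cmax / (1 - \<gamma>) * \<gamma> ^ k \<le> cmax / (1 - \<gamma>) * a"
    using \<open>cmax > 0\<close> \<open>\<gamma> < 1\<close> by (intro mult_left_mono) auto
  also have "\<dots> = \<epsilon> / 2" using \<open>cmax > 0\<close> \<open>\<gamma> < 1\<close> by (simp add: a_def field_simps)
  finally show ?thesis .
qed (use assms in simp)


section \<open>Empirical distributions and the mean-field transition matrix\<close>

locale mean_field_system =
  fixes n :: nat and S W :: "real set" and f :: "real \<Rightarrow> (real \<Rightarrow> real) \<Rightarrow> real \<Rightarrow> real"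
    and P0 PW :: "real list pmf" and q :: real
  assumes n_pos: "n \<ge> 1"
    and S_fin: "finite S" and W_fin: "finite W"
    and f_range: "\<And>s m w. s \<in> S \<Longrightarrow> m \<in> Mset n S \<Longrightarrow> w \<in> W \<Longrightarrow> f s m w \<in> S"
    and P0_supp: "set_pmf P0 \<subseteq> {s. length s = n \<and> set s \<subseteq> S}"
    and PW_supp: "set_pmf PW \<subseteq> {w. length w = n \<and> set w \<subseteq> W}"
    and exchangeable: "\<And>\<pi>. \<pi> permutes {..<n} \<Longrightarrow>
                         map_pmf (\<lambda>w. map (\<lambda>i. w ! \<pi> i) [0..<n]) PW = PW"
    and q_range: "0 \<le> q" "q \<le> 1"
begin

abbreviation \<M> :: "(real \<Rightarrow> real) set" where "\<M> \<equiv> Mset n S"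

definition valid_state :: "real list \<Rightarrow> bool" where
  "valid_state s \<longleftrightarrow> length s = n \<and> set s \<subseteq> S"

definition next_state :: "real list \<Rightarrow> real list \<Rightarrow> real list" where
  "next_state s w = map (\<lambda>i. f (s ! i) (emp n s) (w ! i)) [0..<n]"

lemma emp_eq_count: "length s = n \<Longrightarrow> emp n s x = real (count (mset s) x) / real n"
  by (simp add: emp_def count_mset count_list_eq_length_filter length_filter_conv_card eq_commute)

lemma emp_in_Mset: assumes "valid_state s" shows "emp n s \<in> \<M>"
proof -
  have len: "length s = n" and sub: "set s \<subseteq> S" using assms by (auto simp: valid_state_def)
  have "\<forall>x\<in>S. \<exists>j\<le>n. emp n s x = real j / real n"
  proof
    fix x
    have "count (mset s) x \<le> n"
      using len by (simp add: count_mset count_list_eq_length_filter) (metis length_filter_le)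
    then show "\<exists>j\<le>n. emp n s x = real j / real n" using emp_eq_count[OF len] by blast
  qed
  moreover have "(\<Sum>x\<in>S. emp n s x) = 1"
  proof -
    have "(\<Sum>x\<in>S. real (count_list s x)) = real n"
      using sum_count_set[OF sub S_fin] len by (metis of_nat_sum)
    then show ?thesis using n_pos by (simp add: emp_eq_count[OF len] count_mset sum_divide_distrib[symmetric])
  qed
  moreover have "\<forall>x. x \<notin> S \<longrightarrow> emp n s x = 0"
    using sub by (auto simp: emp_eq_count[OF len] count_mset_0_iff)
  ultimately show ?thesis by (simp add: Mset_def)
qed

lemma finite_Mset: "finite \<M>"
proof -
  let ?B = "(\<lambda>j. real j / real n) ` {..n}"
  have "\<M> \<subseteq> {m. \<forall>x. (x \<in> S \<longrightarrow> m x \<in> ?B) \<and> (x \<notin> S \<longrightarrow> m x = 0)}"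
    by (auto simp: Mset_def)
  moreover have "finite {m. \<forall>x. (x \<in> S \<longrightarrow> m x \<in> ?B) \<and> (x \<notin> S \<longrightarrow> m x = 0)}"
    by (rule finite_set_of_finite_funs) (auto simp: S_fin)
  ultimately show ?thesis by (rule finite_subset)
qed

lemma Mset_realized: assumes "m \<in> \<M>" obtains s where "valid_state s" "emp n s = m"
proof -
  have m0: "\<And>x. x \<notin> S \<Longrightarrow> m x = 0" and mj: "\<And>x. x \<in> S \<Longrightarrow> \<exists>j\<le>n. m x = real j / real n"
    and ms: "(\<Sum>x\<in>S. m x) = 1" using assms by (auto simp: Mset_def)
  define cnt where "cnt x = nat \<lfloor>m x * real n\<rfloor>" for x
  have cnt: "real (cnt x) = m x * real n" if "x \<in> S" for x
    using mj[OF that] n_pos by (auto simp: cnt_def)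
  obtain s where s: "mset s = (\<Sum>x\<in>S. replicate_mset (cnt x) x)" using ex_mset by blast
  have count_s: "count (mset s) y = (if y \<in> S then cnt y else 0)" for y
    by (simp add: s count_sum S_fin)
  have sub: "set s \<subseteq> S"
    using count_s by (metis count_mset_0_iff subsetI)
  have "real (length s) = (\<Sum>x\<in>S. real (count_list s x))"
    using sum_count_set[OF sub S_fin] by (metis of_nat_sum)
  also have "\<dots> = (\<Sum>x\<in>S. m x * real n)"
    by (rule sum.cong) (auto simp: count_mset[symmetric] count_s cnt)
  also have "\<dots> = real n" using ms by (simp add: sum_distrib_right[symmetric])
  finally have len: "length s = n" by simp
  have "emp n s = m"
    using n_pos by (auto simp: fun_eq_iff emp_eq_count[OF len] count_s cnt m0)
  then show ?thesis using that len sub by (auto simp: valid_state_def)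
qed

lemma mset_eq_if_emp_eq:
  assumes "length s = n" "length s' = n" "emp n s = emp n s'"
  shows "mset s = mset s'"
proof (rule multiset_eqI)
  fix x
  have "real (count (mset s) x) / real n = real (count (mset s') x) / real n"
    using assms by (metis emp_eq_count)
  then show "count (mset s) x = count (mset s') x"
    using n_pos by (simp add: divide_cancel_right)
qed

lemma emp_permute_list:
  assumes "p permutes {..<n}" "length u = n"
  shows "emp n (permute_list p u) = emp n u"
  using assms by (simp add: fun_eq_iff emp_eq_count mset_permute_list)

lemma finite_set_PW: "finite (set_pmf PW)"
  by (rule finite_subset[OF PW_supp]) (use finite_lists_length_eq[OF W_fin] in \<open>simp add: conj_commute\<close>)

lemma next_state_valid: assumes "valid_state s" "w \<in> set_pmf PW" shows "valid_state (next_state s w)"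
proof -
  have s: "length s = n" "set s \<subseteq> S" and w: "length w = n" "set w \<subseteq> W"
    using assms PW_supp by (auto simp: valid_state_def)
  have "s ! i \<in> S" "w ! i \<in> W" if "i < n" for i
    using s w that by (metis nth_mem subsetD)+
  then show ?thesis
    using emp_in_Mset[OF assms(1)] by (auto simp: valid_state_def next_state_def intro!: f_range)
qed

lemma emp_next_state_permute_noise:
  assumes p: "p permutes {..<n}" and len: "length s = n"
  shows "emp n (next_state s (map (\<lambda>i. w ! inv p i) [0..<n])) =
         emp n (map (\<lambda>i. f (permute_list p s ! i) (emp n s) (w ! i)) [0..<n])"
proof -
  let ?u = "next_state s (map (\<lambda>i. w ! inv p i) [0..<n])"
  have "permute_list p ?u = map (\<lambda>i. f (permute_list p s ! i) (emp n s) (w ! i)) [0..<n]"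
  proof (rule nth_equalityI)
    fix i assume "i < length (permute_list p ?u)"
    then have i: "i < n" by (simp add: next_state_def)
    have "p i < n" "inv p (p i) = i"
      using permutes_in_image[OF p] permutes_inverses(2)[OF p] i by auto
    then show "permute_list p ?u ! i = map (\<lambda>i. f (permute_list p s ! i) (emp n s) (w ! i)) [0..<n] ! i"
      using permute_list_nth[of p ?u i] permute_list_nth[of p s i] p len i by (simp add: next_state_def)
  qed (simp add: next_state_def)
  then show ?thesis
    using emp_permute_list[OF p, of ?u] by (simp add: next_state_def)
qed

text \<open>\<^const>\<open>Tm\<close> evaluates the transition from an arbitrary representative state of the given
  empirical distribution; relabelling the nodes by a permutation that maps the representative
  to the actual state, exchangeability of the noise shows that the choice does not matter.\<close>

lemma prob_emp_next_state:
  assumes "valid_state s"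
  shows "measure_pmf.prob PW {w. emp n (next_state s w) = m'} = Tm n S f PW m' (emp n s)"
proof -
  define s' where "s' = (SOME s'. length s' = n \<and> set s' \<subseteq> S \<and> emp n s' = emp n s)"
  have len: "length s = n" using assms by (simp add: valid_state_def)
  have s': "length s' = n \<and> set s' \<subseteq> S \<and> emp n s' = emp n s"
    unfolding s'_def by (rule someI_ex) (use assms in \<open>auto simp: valid_state_def\<close>)
  then have "mset s' = mset s" using mset_eq_if_emp_eq len by metis
  then obtain p where p: "p permutes {..<length s}" "permute_list p s = s'"
    by (rule mset_eq_permutation)
  have pn: "p permutes {..<n}" using p len by simp
  define \<sigma> where "\<sigma> w = map (\<lambda>i. w ! inv p i) [0..<n]" for w :: "real list"
  have "map_pmf \<sigma> PW = PW" unfolding \<sigma>_def by (rule exchangeable[OF permutes_inv[OF pn]])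
  then have "measure_pmf.prob PW {w. emp n (next_state s w) = m'} =
             measure_pmf.prob (map_pmf \<sigma> PW) {w. emp n (next_state s w) = m'}"
    by simp
  also have "\<dots> = measure_pmf.prob PW {w. emp n (next_state s (\<sigma> w)) = m'}"
    by (simp add: vimage_def)
  also have "\<dots> = Tm n S f PW m' (emp n s)"
    unfolding Tm_def Let_def s'_def[symmetric] \<sigma>_def emp_next_state_permute_noise[OF pn len]
    using p(2) s' by simp
  finally show ?thesis .
qed

lemma integral_emp_next_state:
  assumes "valid_state s"
  shows "(\<integral>w. H (emp n (next_state s w)) \<partial>PW) = (\<Sum>v\<in>\<M>. H v * Tm n S f PW v (emp n s))"
  using integral_pmf_eq_sum_values[OF finite_Mset, of PW "\<lambda>w. emp n (next_state s w)" H]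
  by (simp add: emp_in_Mset next_state_valid assms prob_emp_next_state)

lemma Tm_nonneg: "Tm n S f PW v m \<ge> 0"
  by (simp add: Tm_def Let_def)

lemma sum_Tm_eq_1: assumes "m \<in> \<M>" shows "(\<Sum>v\<in>\<M>. Tm n S f PW v m) = 1"
proof -
  obtain s where s: "valid_state s" "emp n s = m" using Mset_realized[OF assms] .
  show ?thesis using integral_emp_next_state[OF s(1), where H="\<lambda>_. 1"] s by simp
qed

lemma Tm_outside: assumes "m \<in> \<M>" "v \<notin> \<M>" shows "Tm n S f PW v m = 0"
proof -
  obtain s where s: "valid_state s" "emp n s = m" using Mset_realized[OF assms(1)] .
  have "measure_pmf.prob PW {w. emp n (next_state s w) = v} = 0"
    unfolding measure_pmf_zero_iff using emp_in_Mset[OF next_state_valid[OF s(1)]] assms(2) by auto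
  then show ?thesis using prob_emp_next_state[OF s(1)] s(2) by simp
qed

abbreviation T :: "nat \<Rightarrow> (real \<Rightarrow> real) \<Rightarrow> (real \<Rightarrow> real) \<Rightarrow> real" where
  "T y v x \<equiv> Tpow n S f PW y v x"

lemma Tpow_nonneg: "T y v x \<ge> 0"
  by (induction y arbitrary: v) (auto intro!: sum_nonneg mult_nonneg_nonneg Tm_nonneg)

lemma Tpow_outside: assumes "x \<in> \<M>" "v \<notin> \<M>" shows "T y v x = 0"
  using assms by (cases y) (auto intro!: sum.neutral simp: Tm_outside)

lemma sum_Tpow_eq_1: assumes "x \<in> \<M>" shows "(\<Sum>v\<in>\<M>. T y v x) = 1"
proof (induction y)
  case 0 then show ?case using assms finite_Mset by (simp add: sum.delta')
next
  case (Suc y)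
  have "(\<Sum>v\<in>\<M>. T (Suc y) v x) = (\<Sum>v\<in>\<M>. \<Sum>m\<in>\<M>. Tm n S f PW v m * T y m x)"
    by simp
  also have "\<dots> = (\<Sum>m\<in>\<M>. (\<Sum>v\<in>\<M>. Tm n S f PW v m) * T y m x)"
    by (subst sum.swap) (simp add: sum_distrib_right)
  also have "\<dots> = (\<Sum>m\<in>\<M>. T y m x)" by (rule sum.cong) (auto simp: sum_Tm_eq_1)
  finally show ?case using Suc by simp
qed

lemma sum_Tpow_mult_Tm:
  "(\<Sum>m\<in>\<M>. T y m x * (\<Sum>v\<in>\<M>. Tm n S f PW v m * G v)) = (\<Sum>v\<in>\<M>. T (Suc y) v x * G v)"
proof -
  have "(\<Sum>m\<in>\<M>. T y m x * (\<Sum>v\<in>\<M>. Tm n S f PW v m * G v)) =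
        (\<Sum>v\<in>\<M>. \<Sum>m\<in>\<M>. Tm n S f PW v m * T y m x * G v)"
    by (subst sum.swap) (simp add: sum_distrib_left mult_ac)
  also have "\<dots> = (\<Sum>v\<in>\<M>. T (Suc y) v x * G v)"
    by (simp add: sum_distrib_right)
  finally show ?thesis .
qed

lemma is_belief_Tpow: assumes "x \<in> \<M>" shows "is_belief n S (\<lambda>v. T y v x)"
  using Tpow_nonneg Tpow_outside[OF assms] sum_Tpow_eq_1[OF assms] by (auto simp: is_belief_def)

declare Tpow.simps(2)[simp del]

end

section \<open>Histories and the posterior of the mean field\<close>

type_synonym history = "obs list \<times> nat list"

abbreviation x_hist :: "history \<Rightarrow> real \<Rightarrow> real" where "x_hist r \<equiv> xof (fst r)"
abbreviation y_hist :: "history \<Rightarrow> nat" where "y_hist r \<equiv> yof (fst r)"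

lemma xof_snoc_None[simp]: "xof (os @ [None]) = xof os" by (simp add: xof_def)
lemma xof_snoc_Some[simp]: "xof (os @ [Some v]) = v" by (simp add: xof_def)
lemma yof_snoc_None[simp]: "yof (os @ [None]) = Suc (yof os)" by (simp add: yof_def)
lemma yof_snoc_Some[simp]: "yof (os @ [Some v]) = 0" by (simp add: yof_def)

lemma yof_le_length: "yof os \<le> length os"
  unfolding yof_def by (metis length_rev length_takeWhile_le)

text \<open>One step of \<^const>\<open>run\<close> from the 0-based step \<open>t\<close>: the strategy counts time from 1,
  so the new action is \<open>a\<^sub>t\<^sub>+\<^sub>2\<close>.\<close>

definition extend_hist :: "strategy \<Rightarrow> nat \<Rightarrow> history \<Rightarrow> obs \<Rightarrow> history" where
  "extend_hist g t r o' = (fst r @ [o'], snd r @ [g (t + 2) (fst r @ [o']) (snd r)])"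

definition step_hist :: "strategy \<Rightarrow> nat \<Rightarrow> history \<Rightarrow> bool \<Rightarrow> (real \<Rightarrow> real) \<Rightarrow> history" where
  "step_hist g t r b v = extend_hist g t r (if last (snd r) = 1 \<and> b then Some v else None)"

lemma fst_extend_hist[simp]: "fst (extend_hist g t r o') = fst r @ [o']"
  by (simp add: extend_hist_def)

definition extend_outcome :: "outcome \<Rightarrow> real list \<times> bool \<Rightarrow> outcome" where
  "extend_outcome \<omega> wb = (fst \<omega>, fst (snd \<omega>) @ [fst wb], snd (snd \<omega>) @ [snd wb])"

lemma prefix_pmf_Suc:
  "prefix_pmf P0 PW q (Suc t) = map_pmf (\<lambda>(\<omega>, wb). extend_outcome \<omega> wb)
     (pair_pmf (prefix_pmf P0 PW q t) (pair_pmf PW (bernoulli_pmf q)))"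
proof -
  have "prefix_pmf P0 PW q (Suc t) =
     bind_pmf P0 (\<lambda>s. bind_pmf (rep_pmf t PW) (\<lambda>ws. bind_pmf PW (\<lambda>w.
       bind_pmf (rep_pmf t (bernoulli_pmf q)) (\<lambda>bs. bind_pmf (bernoulli_pmf q) (\<lambda>b.
         return_pmf (s, ws @ [w], bs @ [b]))))))"
    unfolding prefix_pmf_def rep_pmf_Suc_snoc
    by (simp add: pair_pmf_def map_pmf_def bind_assoc_pmf bind_return_pmf)
  also have "\<dots> = bind_pmf P0 (\<lambda>s. bind_pmf (rep_pmf t PW) (\<lambda>ws.
       bind_pmf (rep_pmf t (bernoulli_pmf q)) (\<lambda>bs. bind_pmf PW (\<lambda>w. bind_pmf (bernoulli_pmf q) (\<lambda>b.
         return_pmf (s, ws @ [w], bs @ [b]))))))"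
    by (subst bind_commute_pmf[of PW]) (rule refl)
  also have "\<dots> = map_pmf (\<lambda>(\<omega>, wb). extend_outcome \<omega> wb)
     (pair_pmf (prefix_pmf P0 PW q t) (pair_pmf PW (bernoulli_pmf q)))"
    by (simp add: prefix_pmf_def extend_outcome_def pair_pmf_def map_pmf_def bind_assoc_pmf bind_return_pmf)
  finally show ?thesis .
qed

context mean_field_system
begin

abbreviation pre :: "nat \<Rightarrow> outcome pmf" where "pre t \<equiv> prefix_pmf P0 PW q t"

lemma state_at_Suc: "state_at n f \<omega> (Suc j) = next_state (state_at n f \<omega> j) (fst (snd \<omega>) ! j)"
  by (simp add: next_state_def Let_def)

lemma run_Suc:
  "run n f g \<omega> (Suc j) = step_hist g j (run n f g \<omega> j) (snd (snd \<omega>) ! j) (mf n f \<omega> (Suc j))"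
  by (simp add: step_hist_def extend_hist_def Let_def split: prod.splits)

declare run.simps(2)[simp del] state_at.simps(2)[simp del]

lemma state_at_extend_outcome:
  assumes "length (fst (snd \<omega>)) = t" "i \<le> t"
  shows "state_at n f (extend_outcome \<omega> wb) i = state_at n f \<omega> i"
  using assms(2)
proof (induction i)
  case (Suc i)
  then show ?case using assms(1) by (simp add: state_at_Suc extend_outcome_def nth_append)
qed (simp add: extend_outcome_def)

lemma mf_extend_outcome:
  "length (fst (snd \<omega>)) = t \<Longrightarrow> i \<le> t \<Longrightarrow> mf n f (extend_outcome \<omega> wb) i = mf n f \<omega> i"
  by (simp add: mf_def state_at_extend_outcome)

lemma state_at_extend_outcome_Suc:
  assumes "length (fst (snd \<omega>)) = t"
  shows "state_at n f (extend_outcome \<omega> wb) (Suc t) = next_state (state_at n f \<omega> t) (fst wb)"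
  using state_at_extend_outcome[OF assms le_refl] assms
  by (simp add: state_at_Suc extend_outcome_def nth_append)

lemma run_extend_outcome:
  assumes "length (fst (snd \<omega>)) = t" "length (snd (snd \<omega>)) = t" "i \<le> t"
  shows "run n f g (extend_outcome \<omega> wb) i = run n f g \<omega> i"
  using assms(3)
proof (induction i)
  case 0 then show ?case using mf_extend_outcome[OF assms(1), of 0] by simp
next
  case (Suc i)
  then show ?case using assms(1,2) mf_extend_outcome[OF assms(1) Suc.prems]
    by (simp add: run_Suc extend_outcome_def nth_append)
qed

lemma run_extend_outcome_Suc:
  assumes "length (fst (snd \<omega>)) = t" "length (snd (snd \<omega>)) = t"
  shows "run n f g (extend_outcome \<omega> wb) (Suc t) =
         step_hist g t (run n f g \<omega> t) (snd wb) (emp n (next_state (state_at n f \<omega> t) (fst wb)))"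
  using run_extend_outcome[OF assms le_refl] state_at_extend_outcome_Suc[OF assms(1)] assms
  by (simp add: run_Suc mf_def extend_outcome_def nth_append)

lemma length_run: "length (fst (run n f g \<omega> t)) = Suc t \<and> length (snd (run n f g \<omega> t)) = Suc t"
  by (induction t) (auto simp: run_Suc step_hist_def extend_hist_def)

lemma run_first_obs: "fst (run n f g \<omega> t) ! 0 = Some (mf n f \<omega> 0)"
proof (induction t)
  case (Suc t)
  then show ?case
    using length_run[of g \<omega> t] by (simp add: run_Suc step_hist_def nth_append)
qed simp

lemma run_last_action:
  "snd (run n f g \<omega> t) = butlast (snd (run n f g \<omega> t)) @
     [g (Suc t) (fst (run n f g \<omega> t)) (butlast (snd (run n f g \<omega> t)))]"
  by (cases t) (auto simp: run_Suc step_hist_def extend_hist_def)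

lemma set_run_obs: "set (fst (run n f g \<omega> t)) \<subseteq> insert None ((\<lambda>j. Some (mf n f \<omega> j)) ` {..t})"
proof (induction t)
  case (Suc t) then show ?case by (auto simp: run_Suc step_hist_def)
qed simp

lemma run_action_01: "g \<in> strategies \<Longrightarrow> last (snd (run n f g \<omega> t)) \<in> {0, 1}"
  by (cases t) (auto simp: run_Suc step_hist_def extend_hist_def strategies_def)

lemma finite_set_bernoulli_pmf: "finite (set_pmf (bernoulli_pmf q))"
  by (rule finite_subset[of _ UNIV]) auto

lemma set_prefix_pmf:
  "set_pmf (pre t) = set_pmf P0 \<times> (set_pmf (rep_pmf t PW) \<times> set_pmf (rep_pmf t (bernoulli_pmf q)))"
  by (simp add: prefix_pmf_def)

lemma finite_set_prefix_pmf: "finite (set_pmf (pre t))"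
proof -
  have "finite (set_pmf P0)"
    by (rule finite_subset[OF P0_supp]) (use finite_lists_length_eq[OF S_fin] in \<open>simp add: conj_commute\<close>)
  moreover have "finite (set_pmf (rep_pmf t PW))" "finite (set_pmf (rep_pmf t (bernoulli_pmf q)))"
    unfolding set_pmf_rep_pmf
    using finite_lists_length_eq[OF finite_set_PW] finite_lists_length_eq[OF finite_set_bernoulli_pmf]
    by (simp_all add: conj_commute)
  ultimately show ?thesis by (simp add: set_prefix_pmf)
qed

lemma prefix_pmf_support:
  assumes "\<omega> \<in> set_pmf (pre t)"
  shows "valid_state (fst \<omega>)" "length (fst (snd \<omega>)) = t" "length (snd (snd \<omega>)) = t"
    "\<And>j. j < t \<Longrightarrow> fst (snd \<omega>) ! j \<in> set_pmf PW"
proof -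
  have "fst \<omega> \<in> set_pmf P0" using assms by (auto simp: set_prefix_pmf)
  then show "valid_state (fst \<omega>)" using P0_supp by (auto simp: valid_state_def)
qed (use assms in \<open>auto simp: set_prefix_pmf set_pmf_rep_pmf\<close>)

lemma state_at_valid:
  assumes "\<omega> \<in> set_pmf (pre t)" "i \<le> t"
  shows "valid_state (state_at n f \<omega> i)"
  using assms(2)
proof (induction i)
  case (Suc i)
  then show ?case using next_state_valid prefix_pmf_support(4)[OF assms(1)] by (simp add: state_at_Suc)
qed (use prefix_pmf_support(1)[OF assms(1)] in simp)

lemma mf_in_Mset: "\<omega> \<in> set_pmf (pre t) \<Longrightarrow> i \<le> t \<Longrightarrow> mf n f \<omega> i \<in> \<M>"
  unfolding mf_def by (rule emp_in_Mset[OF state_at_valid])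

lemma x_hist_run_in_Mset:
  assumes "\<omega> \<in> set_pmf (pre t)"
  shows "x_hist (run n f g \<omega> t) \<in> \<M>"
proof -
  let ?os = "fst (run n f g \<omega> t)"
  have "Some (mf n f \<omega> 0) \<in> set ?os"
    using run_first_obs[of g \<omega> t] length_run[of g \<omega> t] by (metis nth_mem zero_less_Suc)
  then have "filter (\<lambda>ob. ob \<noteq> None) ?os \<noteq> []" by (auto simp: filter_empty_conv)
  then have "last (filter (\<lambda>ob. ob \<noteq> None) ?os) \<in> set (filter (\<lambda>ob. ob \<noteq> None) ?os)"
    by (rule last_in_set)
  then obtain j where "j \<le> t" "last (filter (\<lambda>ob. ob \<noteq> None) ?os) = Some (mf n f \<omega> j)"
    using set_run_obs[of g \<omega> t] by auto
  then show ?thesis using mf_in_Mset[OF assms] by (simp add: xof_def)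
qed

lemma integral_prefix_pmf_Suc:
  fixes F :: "outcome \<Rightarrow> real"
  shows "(\<integral>\<omega>. F \<omega> \<partial>pre (Suc t)) =
     (\<integral>\<omega>. (\<integral>w. (\<integral>b. F (extend_outcome \<omega> (w, b)) \<partial>bernoulli_pmf q) \<partial>PW) \<partial>pre t)"
proof -
  have "(\<integral>\<omega>. F \<omega> \<partial>pre (Suc t)) =
     (\<integral>z. F (extend_outcome (fst z) (snd z)) \<partial>pair_pmf (pre t) (pair_pmf PW (bernoulli_pmf q)))"
    by (simp add: prefix_pmf_Suc case_prod_beta)
  also have "\<dots> = (\<integral>\<omega>. (\<integral>w. (\<integral>b. F (extend_outcome \<omega> (w, b)) \<partial>bernoulli_pmf q) \<partial>PW) \<partial>pre t)"
    by (simp add: integral_pair_pmf_finite finite_set_prefix_pmf finite_set_PW finite_set_bernoulli_pmf)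
  finally show ?thesis .
qed

lemma integrable_prefix_pmf[simp]:
  fixes F :: "outcome \<Rightarrow> real"
  shows "integrable (measure_pmf (pre t)) F"
  by (rule integrable_measure_pmf_finite[OF finite_set_prefix_pmf])

lemma integral_prefix_pmf_mono:
  fixes F G :: "outcome \<Rightarrow> real"
  assumes "\<And>\<omega>. \<omega> \<in> set_pmf (pre t) \<Longrightarrow> F \<omega> \<le> G \<omega>"
  shows "(\<integral>\<omega>. F \<omega> \<partial>pre t) \<le> (\<integral>\<omega>. G \<omega> \<partial>pre t)"
  by (rule integral_mono_AE) (auto intro!: AE_pmfI assms)

definition credibility_average ::
    "strategy \<Rightarrow> nat \<Rightarrow> (history \<Rightarrow> (real \<Rightarrow> real) \<Rightarrow> real) \<Rightarrow> history \<Rightarrow> (real \<Rightarrow> real) \<Rightarrow> real" where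
  "credibility_average g t F r v = q * F (step_hist g t r True v) v + (1 - q) * F (step_hist g t r False v) v"

lemma integral_run_Suc:
  fixes F :: "history \<Rightarrow> (real \<Rightarrow> real) \<Rightarrow> real"
  shows "(\<integral>\<omega>. F (run n f g \<omega> (Suc t)) (mf n f \<omega> (Suc t)) \<partial>pre (Suc t)) =
     (\<integral>\<omega>. (\<Sum>v\<in>\<M>. Tm n S f PW v (mf n f \<omega> t) * credibility_average g t F (run n f g \<omega> t) v) \<partial>pre t)"
  unfolding integral_prefix_pmf_Suc
proof (rule integral_cong_AE[OF _ _ AE_pmfI])
  fix \<omega> assume \<omega>: "\<omega> \<in> set_pmf (pre t)"
  let ?s = "state_at n f \<omega> t"
  have "(\<integral>w. (\<integral>b. F (run n f g (extend_outcome \<omega> (w, b)) (Suc t)) (mf n f (extend_outcome \<omega> (w, b)) (Suc t))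
           \<partial>bernoulli_pmf q) \<partial>PW) =
        (\<integral>w. credibility_average g t F (run n f g \<omega> t) (emp n (next_state ?s w)) \<partial>PW)"
    using prefix_pmf_support(2,3)[OF \<omega>] q_range
    by (simp add: run_extend_outcome_Suc mf_def state_at_extend_outcome_Suc credibility_average_def mult.commute)
  also have "\<dots> = (\<Sum>v\<in>\<M>. credibility_average g t F (run n f g \<omega> t) v * Tm n S f PW v (emp n ?s))"
    by (rule integral_emp_next_state[OF state_at_valid[OF \<omega> le_refl]])
  finally show "(\<integral>w. (\<integral>b. F (run n f g (extend_outcome \<omega> (w, b)) (Suc t)) (mf n f (extend_outcome \<omega> (w, b)) (Suc t))
           \<partial>bernoulli_pmf q) \<partial>PW) =
        (\<Sum>v\<in>\<M>. Tm n S f PW v (mf n f \<omega> t) * credibility_average g t F (run n f g \<omega> t) v)"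
    by (simp add: mf_def mult.commute)
qed auto

definition prob_hist :: "strategy \<Rightarrow> nat \<Rightarrow> history \<Rightarrow> real" where
  "prob_hist g t r = measure_pmf.prob (pre t) {\<omega>. run n f g \<omega> t = r}"

definition prob_hist_mf :: "strategy \<Rightarrow> nat \<Rightarrow> history \<Rightarrow> (real \<Rightarrow> real) \<Rightarrow> real" where
  "prob_hist_mf g t r m = measure_pmf.prob (pre t) {\<omega>. run n f g \<omega> t = r \<and> mf n f \<omega> t = m}"

definition posterior_is_Tpow :: "strategy \<Rightarrow> nat \<Rightarrow> bool" where
  "posterior_is_Tpow g t \<longleftrightarrow>
     (\<forall>r m. prob_hist_mf g t r m = prob_hist g t r * T (y_hist r) m (x_hist r))"

lemma integral_mf_eq_posterior:
  fixes K :: "history \<Rightarrow> (real \<Rightarrow> real) \<Rightarrow> real"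
  assumes "posterior_is_Tpow g t"
  shows "(\<integral>\<omega>. K (run n f g \<omega> t) (mf n f \<omega> t) \<partial>pre t) =
     (\<integral>\<omega>. (\<Sum>m\<in>\<M>. T (y_hist (run n f g \<omega> t)) m (x_hist (run n f g \<omega> t)) * K (run n f g \<omega> t) m) \<partial>pre t)"
proof -
  let ?R = "(\<lambda>\<omega>. run n f g \<omega> t) ` set_pmf (pre t)"
  have fin: "finite ?R" using finite_set_prefix_pmf by simp
  have "(\<integral>\<omega>. K (run n f g \<omega> t) (mf n f \<omega> t) \<partial>pre t) =
        (\<Sum>z\<in>?R \<times> \<M>. case_prod K z * measure_pmf.prob (pre t) {\<omega>. (run n f g \<omega> t, mf n f \<omega> t) = z})"
    using integral_pmf_eq_sum_values[OF finite_cartesian_product[OF fin finite_Mset],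
        of "pre t" "\<lambda>\<omega>. (run n f g \<omega> t, mf n f \<omega> t)" "case_prod K"]
    by (simp add: mf_in_Mset)
  also have "\<dots> = (\<Sum>r\<in>?R. \<Sum>m\<in>\<M>. K r m * prob_hist_mf g t r m)"
    unfolding sum.cartesian_product prob_hist_mf_def by (rule sum.cong) auto
  also have "\<dots> = (\<Sum>r\<in>?R. (\<Sum>m\<in>\<M>. T (y_hist r) m (x_hist r) * K r m) * prob_hist g t r)"
  proof (rule sum.cong[OF refl])
    fix r
    have "prob_hist_mf g t r m = prob_hist g t r * T (y_hist r) m (x_hist r)" for m
      using assms unfolding posterior_is_Tpow_def by blast
    then show "(\<Sum>m\<in>\<M>. K r m * prob_hist_mf g t r m) =
               (\<Sum>m\<in>\<M>. T (y_hist r) m (x_hist r) * K r m) * prob_hist g t r"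
      by (simp add: sum_distrib_left sum_distrib_right mult_ac)
  qed
  also have "\<dots> = (\<integral>\<omega>. (\<Sum>m\<in>\<M>. T (y_hist (run n f g \<omega> t)) m (x_hist (run n f g \<omega> t)) * K (run n f g \<omega> t) m) \<partial>pre t)"
    unfolding prob_hist_def
    by (rule integral_pmf_eq_sum_values[OF fin, symmetric]) simp
  finally show ?thesis .
qed

definition step_expectation ::
    "strategy \<Rightarrow> nat \<Rightarrow> (history \<Rightarrow> (real \<Rightarrow> real) \<Rightarrow> real) \<Rightarrow> history \<Rightarrow> real" where
  "step_expectation g t F r =
     (\<Sum>v\<in>\<M>. T (Suc (y_hist r)) v (x_hist r) * credibility_average g t F r v)"

lemma integral_run_Suc_step_expectation:
  fixes F :: "history \<Rightarrow> (real \<Rightarrow> real) \<Rightarrow> real"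
  assumes "posterior_is_Tpow g t"
  shows "(\<integral>\<omega>. F (run n f g \<omega> (Suc t)) (mf n f \<omega> (Suc t)) \<partial>pre (Suc t)) =
         (\<integral>\<omega>. step_expectation g t F (run n f g \<omega> t) \<partial>pre t)"
  unfolding integral_run_Suc step_expectation_def
  by (subst integral_mf_eq_posterior[OF assms,
        where K="\<lambda>r m. \<Sum>v\<in>\<M>. Tm n S f PW v m * credibility_average g t F r v"])
     (simp add: sum_Tpow_mult_Tm)

lemma posterior_is_Tpow_0: "posterior_is_Tpow g 0"
  unfolding posterior_is_Tpow_def
proof (intro allI)
  fix r m
  have first: "mf n f \<omega> 0 = x_hist r \<and> y_hist r = 0" if "run n f g \<omega> 0 = r" for \<omega>
    using that by (auto simp: xof_def yof_def)
  show "prob_hist_mf g 0 r m = prob_hist g 0 r * T (y_hist r) m (x_hist r)"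
  proof (cases "\<exists>\<omega>. run n f g \<omega> 0 = r")
    case True
    then obtain \<omega>\<^sub>0 where "run n f g \<omega>\<^sub>0 0 = r" by blast
    then have "y_hist r = 0" by (rule conjunct2[OF first])
    moreover have "{\<omega>. run n f g \<omega> 0 = r \<and> mf n f \<omega> 0 = m} =
                   (if m = x_hist r then {\<omega>. run n f g \<omega> 0 = r} else {})"
      using first by auto
    ultimately show ?thesis by (simp add: prob_hist_mf_def prob_hist_def)
  next
    case False
    then have "{\<omega>. run n f g \<omega> 0 = r \<and> mf n f \<omega> 0 = m} = {}" "{\<omega>. run n f g \<omega> 0 = r} = {}"
      by auto
    then show ?thesis by (simp only: prob_hist_mf_def prob_hist_def) simp
  qed
qed

text \<open>Bayes' rule for one step: a non-blank observation reveals the new mean field, a blank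
  one leaves the prediction \<open>T\<^sup>y\<^sup>+\<^sup>1(\<cdot>, x)\<close> as posterior.\<close>

lemma sum_Tpow_step_hist_Bayes:
  assumes x: "x_hist r \<in> \<M>"
  shows "(\<Sum>v\<in>\<M>. T (Suc (y_hist r)) v (x_hist r) * of_bool (step_hist g t r b v = r' \<and> v = m)) =
         T (y_hist r') m (x_hist r') * (\<Sum>v\<in>\<M>. T (Suc (y_hist r)) v (x_hist r) * of_bool (step_hist g t r b v = r'))"
proof (cases "last (snd r) = 1 \<and> b")
  case True
  then have step: "step_hist g t r b v = extend_hist g t r (Some v)" for v
    by (simp add: step_hist_def)
  show ?thesis
  proof (cases "\<exists>v0\<in>\<M>. step_hist g t r b v0 = r'")
    case True
    then obtain v0 where v0: "v0 \<in> \<M>" "step_hist g t r b v0 = r'" by blast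
    then have iff: "step_hist g t r b v = r' \<longleftrightarrow> v = v0" for v
      by (auto simp: step extend_hist_def)
    have "x_hist r' = v0" "y_hist r' = 0" using v0(2) by (auto simp: step)
    then show ?thesis
      using v0(1) finite_Mset
      by (auto simp: iff of_bool_def sum.delta' if_distrib cong: if_cong intro!: sum.neutral)
  qed (auto intro!: sum.neutral)
next
  case False
  then have step: "step_hist g t r b v = extend_hist g t r None" for v
    by (auto simp: step_hist_def)
  show ?thesis
  proof (cases "extend_hist g t r None = r'")
    case True
    then have "x_hist r' = x_hist r" "y_hist r' = Suc (y_hist r)" by auto
    then show ?thesis
      using True finite_Mset Tpow_outside[OF x] sum_Tpow_eq_1[OF x]
      by (simp add: step of_bool_def sum.delta' if_distrib cong: if_cong)
  qed (simp add: step)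
qed

lemma step_expectation_Bayes:
  assumes "x_hist r \<in> \<M>"
  shows "step_expectation g t (\<lambda>r v. of_bool (r = r' \<and> v = m)) r =
         T (y_hist r') m (x_hist r') * step_expectation g t (\<lambda>r v. of_bool (r = r')) r"
proof -
  let ?T = "\<lambda>v. T (Suc (y_hist r)) v (x_hist r)"
  have "step_expectation g t (\<lambda>r v. of_bool (r = r' \<and> v = m)) r =
        q * (\<Sum>v\<in>\<M>. ?T v * of_bool (step_hist g t r True v = r' \<and> v = m)) +
        (1 - q) * (\<Sum>v\<in>\<M>. ?T v * of_bool (step_hist g t r False v = r' \<and> v = m))"
    by (simp add: step_expectation_def credibility_average_def sum.distrib sum_distrib_left sum_subtractf algebra_simps)
  also have "\<dots> = T (y_hist r') m (x_hist r') *
        (q * (\<Sum>v\<in>\<M>. ?T v * of_bool (step_hist g t r True v = r')) +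
         (1 - q) * (\<Sum>v\<in>\<M>. ?T v * of_bool (step_hist g t r False v = r')))"
    unfolding sum_Tpow_step_hist_Bayes[OF assms] by (simp add: algebra_simps)
  also have "\<dots> = T (y_hist r') m (x_hist r') * step_expectation g t (\<lambda>r v. of_bool (r = r')) r"
    by (simp add: step_expectation_def credibility_average_def sum.distrib sum_distrib_left sum_subtractf algebra_simps)
  finally show ?thesis .
qed

lemma posterior_is_Tpow_Suc:
  assumes "posterior_is_Tpow g t"
  shows "posterior_is_Tpow g (Suc t)"
  unfolding posterior_is_Tpow_def
proof (intro allI)
  fix r' m
  have "prob_hist_mf g (Suc t) r' m =
        (\<integral>\<omega>. of_bool (run n f g \<omega> (Suc t) = r' \<and> mf n f \<omega> (Suc t) = m) \<partial>pre (Suc t))"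
    by (simp add: prob_hist_mf_def measure_pmf_prob_eq_integral_of_bool)
  also have "\<dots> = (\<integral>\<omega>. step_expectation g t (\<lambda>r v. of_bool (r = r' \<and> v = m)) (run n f g \<omega> t) \<partial>pre t)"
    by (rule integral_run_Suc_step_expectation[OF assms])
  also have "\<dots> = (\<integral>\<omega>. T (y_hist r') m (x_hist r') *
                     step_expectation g t (\<lambda>r v. of_bool (r = r')) (run n f g \<omega> t) \<partial>pre t)"
    by (rule integral_cong_AE) (auto intro!: AE_pmfI simp: step_expectation_Bayes x_hist_run_in_Mset)
  also have "\<dots> = T (y_hist r') m (x_hist r') * prob_hist g (Suc t) r'"
    using integral_run_Suc_step_expectation[OF assms, of "\<lambda>r v. of_bool (r = r')"]
    by (simp add: prob_hist_def measure_pmf_prob_eq_integral_of_bool)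
  finally show "prob_hist_mf g (Suc t) r' m = prob_hist g (Suc t) r' * T (y_hist r') m (x_hist r')"
    by simp
qed

lemma posterior_is_Tpow: "posterior_is_Tpow g t"
  by (induction t) (auto intro: posterior_is_Tpow_0 posterior_is_Tpow_Suc)

lemma belief_eq_Tpow:
  assumes \<omega>: "\<omega> \<in> set_pmf (pre t)"
  shows "belief n f P0 PW q g t (fst (run n f g \<omega> t)) (butlast (snd (run n f g \<omega> t))) =
         (\<lambda>m. T (y_hist (run n f g \<omega> t)) m (x_hist (run n f g \<omega> t)))"
proof
  fix m
  let ?r = "run n f g \<omega> t"
  have same_hist: "fst (run n f g \<omega>' t) = fst ?r \<and> butlast (snd (run n f g \<omega>' t)) = butlast (snd ?r)
                   \<longleftrightarrow> run n f g \<omega>' t = ?r" for \<omega>'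
  proof
    assume same: "fst (run n f g \<omega>' t) = fst ?r \<and> butlast (snd (run n f g \<omega>' t)) = butlast (snd ?r)"
    then have "snd (run n f g \<omega>' t) = snd ?r"
      using run_last_action[of g \<omega>' t] run_last_action[of g \<omega> t] by metis
    then show "run n f g \<omega>' t = ?r" using same by (simp add: prod_eq_iff)
  qed simp
  have "belief n f P0 PW q g t (fst ?r) (butlast (snd ?r)) m = prob_hist_mf g t ?r m / prob_hist g t ?r"
    unfolding belief_def prob_hist_mf_def prob_hist_def same_hist by (simp add: conj_commute)
  also have "\<dots> = T (y_hist ?r) m (x_hist ?r)"
  proof -
    have "prob_hist_mf g t ?r m = prob_hist g t ?r * T (y_hist ?r) m (x_hist ?r)"
      using posterior_is_Tpow[of g t] unfolding posterior_is_Tpow_def by blast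
    moreover have "prob_hist g t ?r > 0"
      unfolding prob_hist_def by (rule measure_pmf_posI[OF \<omega>]) simp
    ultimately show ?thesis by simp
  qed
  finally show "belief n f P0 PW q g t (fst ?r) (butlast (snd ?r)) m = T (y_hist ?r) m (x_hist ?r)" .
qed

lemma step_expectation_hist:
  assumes "x_hist r \<in> \<M>"
  shows "step_expectation g t (\<lambda>r' _. \<Phi> r') r =
    (if last (snd r) = 1
     then q * (\<Sum>v\<in>\<M>. T (Suc (y_hist r)) v (x_hist r) * \<Phi> (extend_hist g t r (Some v)))
          + (1 - q) * \<Phi> (extend_hist g t r None)
     else \<Phi> (extend_hist g t r None))"
proof -
  let ?T = "\<lambda>v. T (Suc (y_hist r)) v (x_hist r)"
  have blank: "(\<Sum>v\<in>\<M>. ?T v * c) = c" "(\<Sum>v\<in>\<M>. c * ?T v) = c" for c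
    using sum_Tpow_eq_1[OF assms] by (simp_all add: sum_distrib_right[symmetric] sum_distrib_left[symmetric])
  show ?thesis
  proof (cases "last (snd r) = 1")
    case True
    have "step_expectation g t (\<lambda>r' _. \<Phi> r') r =
          (\<Sum>v\<in>\<M>. q * (?T v * \<Phi> (extend_hist g t r (Some v))) + ?T v * ((1 - q) * \<Phi> (extend_hist g t r None)))"
      using True by (simp add: step_expectation_def credibility_average_def step_hist_def algebra_simps)
    then show ?thesis using True by (simp add: sum.distrib sum_distrib_left[symmetric] blank)
  next
    case False
    then show ?thesis
      by (simp add: step_expectation_def credibility_average_def step_hist_def blank algebra_simps)
  qed
qed

lemma integral_run_Suc_hist:
  "(\<integral>\<omega>. \<Phi> (run n f g \<omega> (Suc t)) \<partial>pre (Suc t)) =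
   (\<integral>\<omega>. step_expectation g t (\<lambda>r _. \<Phi> r) (run n f g \<omega> t) \<partial>pre t)"
  using integral_run_Suc_step_expectation[OF posterior_is_Tpow, where F="\<lambda>r _. \<Phi> r"] by simp

end

section \<open>The truncated dynamic program\<close>

locale truncated_dp = mean_field_system +
  fixes h :: "((real \<Rightarrow> real) \<Rightarrow> real) \<Rightarrow> (real \<Rightarrow> real)"
    and c :: "(real \<Rightarrow> real) \<Rightarrow> (real \<Rightarrow> real) \<Rightarrow> nat \<Rightarrow> real"
    and \<gamma> cmax :: real and k :: nat and mstar :: "real \<Rightarrow> real"
    and V :: "(real \<Rightarrow> real) \<Rightarrow> nat \<Rightarrow> real"
  assumes gamma_range: "0 < \<gamma>" "\<gamma> < 1"
    and h_range: "\<And>b. is_belief n S b \<Longrightarrow> h b \<in> Mset n S"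
    and c_nonneg: "\<And>m m' a. m \<in> Mset n S \<Longrightarrow> m' \<in> Mset n S \<Longrightarrow> a \<in> {0, 1} \<Longrightarrow> 0 \<le> c m m' a"
    and c_bound: "\<And>m m' a. m \<in> Mset n S \<Longrightarrow> m' \<in> Mset n S \<Longrightarrow> a \<in> {0, 1} \<Longrightarrow> c m m' a \<le> cmax"
    and mstar_in: "mstar \<in> Mset n S"
    and V_sol: "\<And>x y. x \<in> Mset n S \<Longrightarrow> y \<le> k \<Longrightarrow>
                  V x y = min (V0 n S f PW h c \<gamma> k mstar V x y) (V1 n S f PW h c \<gamma> q k mstar V x y)"
begin

abbreviation Vt0 :: "(real \<Rightarrow> real) \<Rightarrow> nat \<Rightarrow> real" where
  "Vt0 x y \<equiv> V0 n S f PW h c \<gamma> k mstar V x y"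

abbreviation Vt1 :: "(real \<Rightarrow> real) \<Rightarrow> nat \<Rightarrow> real" where
  "Vt1 x y \<equiv> V1 n S f PW h c \<gamma> q k mstar V x y"

definition Vmax :: real where "Vmax = cmax / (1 - \<gamma>)"

abbreviation V_reset :: real where "V_reset \<equiv> V mstar 0"

definition greedy_strategy :: "strategy \<Rightarrow> bool" where
  "greedy_strategy g \<longleftrightarrow>
     (\<forall>t os as. yof os \<le> k \<longrightarrow> g t os as = (if Vt0 (xof os) (yof os) \<le> Vt1 (xof os) (yof os) then 0 else 1))"

definition belief_cost :: "(real \<Rightarrow> real) \<Rightarrow> nat \<Rightarrow> nat \<Rightarrow> real" where
  "belief_cost x y a = (\<Sum>m\<in>\<M>. c m (h (\<lambda>m'. T y m' x)) a * T y m x)"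

definition V_next :: "(real \<Rightarrow> real) \<Rightarrow> nat \<Rightarrow> real" where
  "V_next x y = (if y < k then 1 else 0) * V x (y + 1) + (if y = k then 1 else 0) * V mstar 0"

lemma Vt0_eq: "Vt0 x y = belief_cost x y 0 + \<gamma> * V_next x y"
  by (simp add: V0_def belief_cost_def V_next_def)

lemma Vt1_eq:
  "Vt1 x y = belief_cost x y 1 + (1 - q) * \<gamma> * V_next x y + q * \<gamma> * (\<Sum>m'\<in>\<M>. T (Suc y) m' x * V m' 0)"
  by (simp add: V1_def belief_cost_def V_next_def)

lemma V_next_eq: "y \<le> k \<Longrightarrow> V_next x y = (if y < k then V x (Suc y) else 0) + of_bool (y = k) * V_reset"
  by (auto simp: V_next_def)

lemma belief_cost_bounds:
  assumes "x \<in> \<M>" "a \<in> {0, 1}"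
  shows "0 \<le> belief_cost x y a" "belief_cost x y a \<le> cmax"
proof -
  have h_in: "h (\<lambda>m'. T y m' x) \<in> \<M>" by (rule h_range[OF is_belief_Tpow[OF assms(1)]])
  show "0 \<le> belief_cost x y a" unfolding belief_cost_def
    by (rule sum_nonneg) (auto intro!: mult_nonneg_nonneg c_nonneg[OF _ h_in assms(2)] Tpow_nonneg)
  have "belief_cost x y a \<le> (\<Sum>m\<in>\<M>. cmax * T y m x)" unfolding belief_cost_def
    by (rule sum_mono) (auto intro!: mult_right_mono c_bound[OF _ h_in assms(2)] Tpow_nonneg)
  also have "\<dots> = cmax" using sum_Tpow_eq_1[OF assms(1)] by (simp add: sum_distrib_left[symmetric])
  finally show "belief_cost x y a \<le> cmax" .
qed

lemma cmax_nonneg: "0 \<le> cmax"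
  using c_nonneg[OF mstar_in mstar_in, of 0] c_bound[OF mstar_in mstar_in, of 0] by simp

lemma Vmax_nonneg: "0 \<le> Vmax"
  using cmax_nonneg gamma_range by (simp add: Vmax_def)

lemma Vmax_fixpoint: "cmax + \<gamma> * Vmax = Vmax"
  using gamma_range by (simp add: Vmax_def field_simps)

lemma exp_cost_eq_belief_cost:
  "exp_cost n f P0 PW q h c g t =
   (\<integral>\<omega>. belief_cost (x_hist (run n f g \<omega> t)) (y_hist (run n f g \<omega> t)) (last (snd (run n f g \<omega> t))) \<partial>pre t)"
proof -
  let ?K = "\<lambda>r m. c m (h (\<lambda>m'. T (y_hist r) m' (x_hist r))) (last (snd r))"
  have "exp_cost n f P0 PW q h c g t = (\<integral>\<omega>. ?K (run n f g \<omega> t) (mf n f \<omega> t) \<partial>pre t)"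
    unfolding exp_cost_def
    by (rule integral_cong_AE) (auto intro!: AE_pmfI simp: belief_eq_Tpow case_prod_beta)
  also have "\<dots> = (\<integral>\<omega>. belief_cost (x_hist (run n f g \<omega> t)) (y_hist (run n f g \<omega> t))
                        (last (snd (run n f g \<omega> t))) \<partial>pre t)"
    by (subst integral_mf_eq_posterior[OF posterior_is_Tpow]) (simp add: belief_cost_def mult.commute)
  finally show ?thesis .
qed

lemma V_next_on_grid:
  assumes "x \<in> \<M>" "y \<le> k"
  obtains x' y' where "x' \<in> \<M>" "y' \<le> k" "V_next x y = V x' y'"
proof (cases "y < k")
  case True
  then show ?thesis using that[of x "Suc y"] assms by (simp add: V_next_def)
next
  case False
  then show ?thesis using that[of mstar 0] assms mstar_in by (simp add: V_next_def)
qed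

lemma V_le_if_grid_le:
  assumes le_u: "\<And>x' y'. x' \<in> \<M> \<Longrightarrow> y' \<le> k \<Longrightarrow> V x' y' \<le> u" and "x \<in> \<M>" "y \<le> k"
  shows "V x y \<le> cmax + \<gamma> * u"
proof -
  obtain x' y' where next_grid: "x' \<in> \<M>" "y' \<le> k" "V_next x y = V x' y'"
    using V_next_on_grid[OF assms(2,3)] .
  have "V x y \<le> Vt0 x y" using V_sol[OF assms(2,3)] by simp
  also have "\<dots> = belief_cost x y 0 + \<gamma> * V x' y'" by (simp add: Vt0_eq next_grid)
  also have "\<dots> \<le> cmax + \<gamma> * u"
    using belief_cost_bounds(2)[OF assms(2), of 0 y] le_u[OF next_grid(1,2)] gamma_range
    by (intro add_mono mult_left_mono) auto
  finally show ?thesis .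
qed

lemma V_ge_if_grid_ge:
  assumes ge_l: "\<And>x' y'. x' \<in> \<M> \<Longrightarrow> y' \<le> k \<Longrightarrow> l \<le> V x' y'" and x: "x \<in> \<M>" and y: "y \<le> k"
  shows "\<gamma> * l \<le> V x y"
proof -
  have next_ge: "l \<le> V_next x y"
    using V_next_on_grid[OF x y] ge_l by metis
  have reset_ge: "l \<le> (\<Sum>m'\<in>\<M>. T (Suc y) m' x * V m' 0)"
  proof -
    have "l = (\<Sum>m'\<in>\<M>. T (Suc y) m' x * l)"
      using sum_Tpow_eq_1[OF x] by (simp add: sum_distrib_right[symmetric])
    also have "\<dots> \<le> (\<Sum>m'\<in>\<M>. T (Suc y) m' x * V m' 0)"
      by (intro sum_mono mult_left_mono ge_l Tpow_nonneg) auto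
    finally show ?thesis .
  qed
  have "\<gamma> * l \<le> Vt0 x y"
    using belief_cost_bounds(1)[OF x, of 0 y] mult_left_mono[OF next_ge less_imp_le[OF gamma_range(1)]]
    by (simp add: Vt0_eq)
  moreover have "\<gamma> * l = (1 - q) * \<gamma> * l + q * \<gamma> * l" by (simp add: algebra_simps)
  then have "\<gamma> * l \<le> Vt1 x y"
    using belief_cost_bounds(1)[OF x, of 1 y] q_range gamma_range next_ge reset_ge
      mult_left_mono[of l "V_next x y" "(1 - q) * \<gamma>"]
      mult_left_mono[of l "\<Sum>m'\<in>\<M>. T (Suc y) m' x * V m' 0" "q * \<gamma>"]
    by (simp add: Vt1_eq)
  ultimately show ?thesis using V_sol[OF x y] by simp
qed

lemma V_bounds:
  assumes "x \<in> \<M>" "y \<le> k"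
  shows "0 \<le> V x y" "V x y \<le> Vmax"
proof -
  let ?G = "(\<lambda>(x, y). V x y) ` (\<M> \<times> {..k})"
  have fin: "finite ?G" and ne: "?G \<noteq> {}" using finite_Mset mstar_in by auto
  have in_G: "V x' y' \<in> ?G" if "x' \<in> \<M>" "y' \<le> k" for x' y' using that by force
  have le_Max: "V x' y' \<le> Max ?G" if "x' \<in> \<M>" "y' \<le> k" for x' y'
    by (rule Max_ge[OF fin in_G[OF that]])
  have Min_le: "Min ?G \<le> V x' y'" if "x' \<in> \<M>" "y' \<le> k" for x' y'
    by (rule Min_le[OF fin in_G[OF that]])
  have "Max ?G \<in> ?G" "Min ?G \<in> ?G" using fin ne by (auto intro: Max_in Min_in)
  then obtain xM yM xm ym where grid: "xM \<in> \<M>" "yM \<le> k" "V xM yM = Max ?G"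
      "xm \<in> \<M>" "ym \<le> k" "V xm ym = Min ?G" by auto
  have "Max ?G \<le> cmax + \<gamma> * Max ?G"
    using V_le_if_grid_le[OF le_Max grid(1,2)] grid(3) by simp
  then have "Max ?G \<le> Vmax" using gamma_range by (simp add: Vmax_def field_simps)
  moreover have "\<gamma> * Min ?G \<le> Min ?G"
    using V_ge_if_grid_ge[OF Min_le grid(4,5)] grid(6) by simp
  then have "0 \<le> (1 - \<gamma>) * Min ?G" by (simp add: algebra_simps)
  then have "0 \<le> Min ?G" using gamma_range by (simp add: zero_le_mult_iff)
  ultimately show "0 \<le> V x y" "V x y \<le> Vmax"
    using le_Max[OF assms] Min_le[OF assms] by linarith+
qed

section \<open>Comparison of the cost with the truncated value\<close>

definition within_horizon :: "obs list \<Rightarrow> bool" where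
  "within_horizon os \<longleftrightarrow> (\<forall>i\<le>length os. yof (take i os) \<le> k)"

lemma within_horizon_snoc: "within_horizon (os @ [o']) \<longleftrightarrow> within_horizon os \<and> yof (os @ [o']) \<le> k"
  unfolding within_horizon_def by (auto simp: le_Suc_eq)

lemma within_horizon_yof: "within_horizon os \<Longrightarrow> yof os \<le> k"
  unfolding within_horizon_def by (metis order_refl take_all)

lemma within_horizon_single: "within_horizon [Some v]"
  unfolding within_horizon_def yof_def by (auto simp: le_Suc_eq)

definition lower_potential :: "obs list \<Rightarrow> real" where
  "lower_potential os = (if within_horizon os then V (xof os) (yof os) else 0)"

definition upper_potential :: "obs list \<Rightarrow> real" where
  "upper_potential os = (if within_horizon os then V (xof os) (yof os) else Vmax)"

text \<open>The conditional probability that the next history leaves the horizon, i.e.\ that a blank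
  observation arrives while \<open>y = k\<close>. This is exactly where \<open>V\<close> resets to \<open>m\<^sup>*\<close> instead of
  following the true dynamics, so it weighs the error of the truncation.\<close>

definition exit_prob :: "history \<Rightarrow> real" where
  "exit_prob r = of_bool (within_horizon (fst r) \<and> y_hist r = k) * (if last (snd r) = 1 then 1 - q else 1)"

lemma lower_potential_step:
  assumes x: "x_hist r \<in> \<M>" and a: "last (snd r) \<in> {0, 1}"
  shows "lower_potential (fst r) \<le> belief_cost (x_hist r) (y_hist r) (last (snd r)) +
           \<gamma> * step_expectation g t (\<lambda>r' _. lower_potential (fst r')) r + \<gamma> * V_reset * exit_prob r"
proof (cases "within_horizon (fst r)")
  case True
  have y: "y_hist r \<le> k" by (rule within_horizon_yof[OF True])
  have blank: "lower_potential (fst r @ [None]) = (if y_hist r < k then V (x_hist r) (Suc (y_hist r)) else 0)"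
    using True y by (auto simp: lower_potential_def within_horizon_snoc)
  have obs: "lower_potential (fst r @ [Some v]) = V v 0" for v
    using True by (simp add: lower_potential_def within_horizon_snoc)
  have "lower_potential (fst r) \<le> (if last (snd r) = 1 then Vt1 (x_hist r) (y_hist r) else Vt0 (x_hist r) (y_hist r))"
    using True V_sol[OF x y] by (simp add: lower_potential_def)
  also have "\<dots> = belief_cost (x_hist r) (y_hist r) (last (snd r)) +
           \<gamma> * step_expectation g t (\<lambda>r' _. lower_potential (fst r')) r + \<gamma> * V_reset * exit_prob r"
    using a True
    by (auto simp: Vt0_eq Vt1_eq V_next_eq[OF y] step_expectation_hist[OF x] blank obs exit_prob_def
        algebra_simps)
  finally show ?thesis .
next
  case False
  then show ?thesis
    using belief_cost_bounds(1)[OF x a]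
    by (simp add: lower_potential_def step_expectation_hist[OF x] within_horizon_snoc exit_prob_def)
qed

lemma upper_potential_step_within:
  assumes x: "x_hist r \<in> \<M>" and inside: "within_horizon (fst r)"
    and greedy: "last (snd r) = (if Vt0 (x_hist r) (y_hist r) \<le> Vt1 (x_hist r) (y_hist r) then 0 else 1)"
  shows "belief_cost (x_hist r) (y_hist r) (last (snd r)) +
           \<gamma> * step_expectation g t (\<lambda>r' _. upper_potential (fst r')) r
         \<le> upper_potential (fst r) + \<gamma> * (Vmax - V_reset) * exit_prob r"
proof -
  have y: "y_hist r \<le> k" by (rule within_horizon_yof[OF inside])
  let ?I = "of_bool (y_hist r = k) :: real"
  have blank: "upper_potential (fst r @ [None]) = V_next (x_hist r) (y_hist r) + ?I * (Vmax - V_reset)"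
    using inside y by (auto simp: upper_potential_def within_horizon_snoc V_next_eq)
  have obs: "upper_potential (fst r @ [Some v]) = V v 0" for v
    using inside by (simp add: upper_potential_def within_horizon_snoc)
  show ?thesis
  proof (cases "Vt0 (x_hist r) (y_hist r) \<le> Vt1 (x_hist r) (y_hist r)")
    case True
    then have "last (snd r) = 0" "upper_potential (fst r) = Vt0 (x_hist r) (y_hist r)"
      using greedy V_sol[OF x y] inside by (auto simp: upper_potential_def)
    then show ?thesis
      using inside by (simp add: Vt0_eq step_expectation_hist[OF x] blank exit_prob_def algebra_simps)
  next
    case False
    let ?S = "\<Sum>v\<in>\<M>. T (Suc (y_hist r)) v (x_hist r) * V v 0"
    have a1: "last (snd r) = 1" using greedy False by simp
    have U: "upper_potential (fst r) =
             belief_cost (x_hist r) (y_hist r) 1 + (1 - q) * \<gamma> * V_next (x_hist r) (y_hist r) + q * \<gamma> * ?S"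
      using V_sol[OF x y] inside False by (simp add: upper_potential_def Vt1_eq)
    have E: "step_expectation g t (\<lambda>r' _. upper_potential (fst r')) r =
             q * ?S + (1 - q) * (V_next (x_hist r) (y_hist r) + ?I * (Vmax - V_reset))"
      using a1 by (simp add: step_expectation_hist[OF x] blank obs)
    have e: "exit_prob r = ?I * (1 - q)" using a1 inside by (simp add: exit_prob_def)
    show ?thesis unfolding U E e a1 by (simp add: algebra_simps)
  qed
qed

lemma upper_potential_step:
  assumes x: "x_hist r \<in> \<M>" and a: "last (snd r) \<in> {0, 1}"
    and greedy: "within_horizon (fst r) \<Longrightarrow>
                 last (snd r) = (if Vt0 (x_hist r) (y_hist r) \<le> Vt1 (x_hist r) (y_hist r) then 0 else 1)"
  shows "belief_cost (x_hist r) (y_hist r) (last (snd r)) +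
           \<gamma> * step_expectation g t (\<lambda>r' _. upper_potential (fst r')) r
         \<le> upper_potential (fst r) + \<gamma> * (Vmax - V_reset) * exit_prob r"
proof (cases "within_horizon (fst r)")
  case True
  show ?thesis by (rule upper_potential_step_within[OF x True greedy[OF True]])
next
  case False
  have "(\<Sum>v\<in>\<M>. T (Suc (y_hist r)) v (x_hist r) * Vmax) = Vmax"
    using sum_Tpow_eq_1[OF x] by (simp add: sum_distrib_right[symmetric])
  then have "step_expectation g t (\<lambda>r' _. upper_potential (fst r')) r = Vmax"
    using False by (simp add: step_expectation_hist[OF x] upper_potential_def within_horizon_snoc algebra_simps)
  then show ?thesis
    using False belief_cost_bounds(2)[OF x a, of "y_hist r"] Vmax_fixpoint
    by (simp add: upper_potential_def exit_prob_def)
qed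

lemma exited_step:
  assumes x: "x_hist r \<in> \<M>"
  shows "step_expectation g t (\<lambda>r' _. of_bool (\<not> within_horizon (fst r'))) r =
         of_bool (\<not> within_horizon (fst r)) + exit_prob r"
proof (cases "within_horizon (fst r)")
  case True
  then show ?thesis
    using within_horizon_yof[OF True]
    by (auto simp: step_expectation_hist[OF x] within_horizon_snoc exit_prob_def)
next
  case False
  then show ?thesis
    using sum_Tpow_eq_1[OF x]
    by (simp add: step_expectation_hist[OF x] within_horizon_snoc exit_prob_def)
qed

abbreviation cost :: "strategy \<Rightarrow> nat \<Rightarrow> real" where
  "cost g t \<equiv> exp_cost n f P0 PW q h c g t"

definition lower_value :: "strategy \<Rightarrow> nat \<Rightarrow> real" where
  "lower_value g t = (\<integral>\<omega>. lower_potential (fst (run n f g \<omega> t)) \<partial>pre t)"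

definition upper_value :: "strategy \<Rightarrow> nat \<Rightarrow> real" where
  "upper_value g t = (\<integral>\<omega>. upper_potential (fst (run n f g \<omega> t)) \<partial>pre t)"

definition exit_mass :: "strategy \<Rightarrow> nat \<Rightarrow> real" where
  "exit_mass g t = (\<integral>\<omega>. exit_prob (run n f g \<omega> t) \<partial>pre t)"

definition exited_mass :: "strategy \<Rightarrow> nat \<Rightarrow> real" where
  "exited_mass g t = (\<integral>\<omega>. of_bool (\<not> within_horizon (fst (run n f g \<omega> t))) \<partial>pre t)"

lemma lower_value_step:
  assumes "g \<in> strategies"
  shows "lower_value g t \<le> cost g t + \<gamma> * lower_value g (Suc t) + \<gamma> * V_reset * exit_mass g t"
proof -
  have "lower_value g t \<le> (\<integral>\<omega>. belief_cost (x_hist (run n f g \<omega> t)) (y_hist (run n f g \<omega> t))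
          (last (snd (run n f g \<omega> t))) +
        \<gamma> * step_expectation g t (\<lambda>r' _. lower_potential (fst r')) (run n f g \<omega> t) +
        \<gamma> * V_reset * exit_prob (run n f g \<omega> t) \<partial>pre t)"
    unfolding lower_value_def
    by (rule integral_prefix_pmf_mono, rule lower_potential_step[OF x_hist_run_in_Mset run_action_01[OF assms]])
  also have "\<dots> = cost g t + \<gamma> * lower_value g (Suc t) + \<gamma> * V_reset * exit_mass g t"
    by (simp add: exp_cost_eq_belief_cost lower_value_def exit_mass_def
        integral_run_Suc_hist[where \<Phi>="\<lambda>r. lower_potential (fst r)"])
  finally show ?thesis .
qed

lemma upper_value_step:
  assumes "gs \<in> strategies" "greedy_strategy gs"
  shows "cost gs t + \<gamma> * upper_value gs (Suc t) \<le> upper_value gs t + \<gamma> * (Vmax - V_reset) * exit_mass gs t"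
proof -
  have "cost gs t + \<gamma> * upper_value gs (Suc t) =
        (\<integral>\<omega>. belief_cost (x_hist (run n f gs \<omega> t)) (y_hist (run n f gs \<omega> t)) (last (snd (run n f gs \<omega> t))) +
           \<gamma> * step_expectation gs t (\<lambda>r' _. upper_potential (fst r')) (run n f gs \<omega> t) \<partial>pre t)"
    by (simp add: exp_cost_eq_belief_cost upper_value_def
        integral_run_Suc_hist[where \<Phi>="\<lambda>r. upper_potential (fst r)"])
  also have "\<dots> \<le> (\<integral>\<omega>. upper_potential (fst (run n f gs \<omega> t)) +
                    \<gamma> * (Vmax - V_reset) * exit_prob (run n f gs \<omega> t) \<partial>pre t)"
  proof (rule integral_prefix_pmf_mono)
    fix \<omega> assume \<omega>: "\<omega> \<in> set_pmf (pre t)"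
    let ?r = "run n f gs \<omega> t"
    have "last (snd ?r) = (if Vt0 (x_hist ?r) (y_hist ?r) \<le> Vt1 (x_hist ?r) (y_hist ?r) then 0 else 1)"
      if "within_horizon (fst ?r)"
      using assms(2) run_last_action[of gs \<omega> t] within_horizon_yof[OF that]
      unfolding greedy_strategy_def by (metis last_snoc)
    then show "belief_cost (x_hist ?r) (y_hist ?r) (last (snd ?r)) +
               \<gamma> * step_expectation gs t (\<lambda>r' _. upper_potential (fst r')) ?r
               \<le> upper_potential (fst ?r) + \<gamma> * (Vmax - V_reset) * exit_prob ?r"
      by (rule upper_potential_step[OF x_hist_run_in_Mset[OF \<omega>] run_action_01[OF assms(1)]])
  qed
  also have "\<dots> = upper_value gs t + \<gamma> * (Vmax - V_reset) * exit_mass gs t"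
    by (simp add: upper_value_def exit_mass_def)
  finally show ?thesis .
qed

lemma exited_mass_Suc: "exited_mass g (Suc t) = exited_mass g t + exit_mass g t"
proof -
  have "exited_mass g (Suc t) =
        (\<integral>\<omega>. step_expectation g t (\<lambda>r' _. of_bool (\<not> within_horizon (fst r'))) (run n f g \<omega> t) \<partial>pre t)"
    unfolding exited_mass_def by (rule integral_run_Suc_hist)
  also have "\<dots> = (\<integral>\<omega>. of_bool (\<not> within_horizon (fst (run n f g \<omega> t))) + exit_prob (run n f g \<omega> t) \<partial>pre t)"
    by (rule integral_cong_AE) (auto intro!: AE_pmfI simp: exited_step x_hist_run_in_Mset)
  also have "\<dots> = exited_mass g t + exit_mass g t"
    by (simp add: exited_mass_def exit_mass_def)
  finally show ?thesis .
qed

lemma exit_mass_nonneg: "0 \<le> exit_mass g t"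
  unfolding exit_mass_def exit_prob_def using q_range by (intro integral_nonneg_AE) auto

lemma exit_mass_early:
  assumes "Suc t < k"
  shows "exit_mass g t = 0"
proof -
  have "y_hist (run n f g \<omega> t) \<noteq> k" for \<omega>
    using yof_le_length[of "fst (run n f g \<omega> t)"] length_run[of g \<omega> t] assms by simp
  then show ?thesis by (simp add: exit_mass_def exit_prob_def)
qed

lemma discounted_exit_mass_le: "(\<Sum>t<N. \<gamma> ^ Suc t * exit_mass g t) \<le> \<gamma> ^ k"
proof (rule discounted_late_increments_le[where e="exited_mass g"])
  show "0 \<le> exited_mass g 0" unfolding exited_mass_def by (intro integral_nonneg_AE) auto
  have "exited_mass g N \<le> (\<integral>\<omega>. 1 \<partial>pre N)"
    unfolding exited_mass_def by (rule integral_prefix_pmf_mono) simp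
  then show "exited_mass g N \<le> 1" by simp
qed (use exited_mass_Suc exit_mass_nonneg exit_mass_early gamma_range in auto)

lemma lower_value_le_Vmax: "lower_value g t \<le> Vmax"
proof -
  have "lower_value g t \<le> (\<integral>\<omega>. Vmax \<partial>pre t)" unfolding lower_value_def
    by (rule integral_prefix_pmf_mono)
       (use V_bounds(2)[OF x_hist_run_in_Mset within_horizon_yof] Vmax_nonneg
        in \<open>simp add: lower_potential_def\<close>)
  then show ?thesis by simp
qed

lemma upper_value_nonneg: "0 \<le> upper_value g t"
  unfolding upper_value_def upper_potential_def
  using V_bounds(1)[OF x_hist_run_in_Mset within_horizon_yof] Vmax_nonneg
  by (intro integral_nonneg_AE AE_pmfI) simp

lemma lower_value_0_eq_upper_value_0: "lower_value g 0 = upper_value g' 0"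
  by (simp add: lower_value_def upper_value_def lower_potential_def upper_potential_def
      within_horizon_single xof_def yof_def)

lemma cost_bounds: "g \<in> strategies \<Longrightarrow> 0 \<le> cost g t \<and> cost g t \<le> cmax"
  unfolding exp_cost_eq_belief_cost
  using belief_cost_bounds[OF x_hist_run_in_Mset run_action_01] integral_prefix_pmf_mono[of t _ "\<lambda>_. cmax"]
  by (auto intro!: integral_nonneg_AE AE_pmfI)

lemma summable_discounted_cost:
  assumes "g \<in> strategies"
  shows "summable (\<lambda>t. \<gamma> ^ t * cost g t)"
proof (rule summable_comparison_test')
  show "summable (\<lambda>t. cmax * \<gamma> ^ t)"
    using gamma_range by (intro summable_mult summable_geometric) simp
  show "norm (\<gamma> ^ t * cost g t) \<le> cmax * \<gamma> ^ t" for t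
    using cost_bounds[OF assms, of t] gamma_range by (simp add: abs_mult mult.commute mult_left_mono)
qed

lemma Jcost_le_upper_value:
  assumes "gs \<in> strategies" "greedy_strategy gs"
  shows "Jcost n f P0 PW q h c \<gamma> gs \<le> upper_value gs 0 + (Vmax - V_reset) * \<gamma> ^ k"
  unfolding Jcost_def
proof (rule suminf_le_const[OF summable_discounted_cost[OF assms(1)]])
  fix N
  have "(\<Sum>t<N. \<gamma> ^ t * cost gs t) + \<gamma> ^ N * upper_value gs N \<le>
        upper_value gs 0 + (Vmax - V_reset) * (\<Sum>t<N. \<gamma> ^ Suc t * exit_mass gs t)"
    using upper_value_step[OF assms] gamma_range by (intro discounted_telescope_upper) auto
  moreover have "0 \<le> \<gamma> ^ N * upper_value gs N" using upper_value_nonneg gamma_range by simp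
  moreover have "(Vmax - V_reset) * (\<Sum>t<N. \<gamma> ^ Suc t * exit_mass gs t) \<le> (Vmax - V_reset) * \<gamma> ^ k"
    using discounted_exit_mass_le V_bounds[OF mstar_in, of 0] by (intro mult_left_mono) auto
  ultimately show "(\<Sum>t<N. \<gamma> ^ t * cost gs t) \<le> upper_value gs 0 + (Vmax - V_reset) * \<gamma> ^ k"
    by linarith
qed

lemma lower_value_le_Jcost:
  assumes "g \<in> strategies"
  shows "lower_value g 0 - V_reset * \<gamma> ^ k \<le> Jcost n f P0 PW q h c \<gamma> g"
proof (rule LIMSEQ_le_const)
  have "(\<lambda>N. \<Sum>t<N. \<gamma> ^ t * cost g t) \<longlonglongrightarrow> Jcost n f P0 PW q h c \<gamma> g"
    unfolding Jcost_def by (rule summable_LIMSEQ[OF summable_discounted_cost[OF assms]])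
  moreover have "(\<lambda>N. \<gamma> ^ N * Vmax) \<longlonglongrightarrow> 0"
    using gamma_range by (intro tendsto_mult_left_zero LIMSEQ_power_zero) simp
  ultimately show "(\<lambda>N. (\<Sum>t<N. \<gamma> ^ t * cost g t) + \<gamma> ^ N * Vmax) \<longlonglongrightarrow> Jcost n f P0 PW q h c \<gamma> g"
    using tendsto_add by fastforce
  show "\<exists>N0. \<forall>N\<ge>N0. lower_value g 0 - V_reset * \<gamma> ^ k \<le> (\<Sum>t<N. \<gamma> ^ t * cost g t) + \<gamma> ^ N * Vmax"
  proof (intro exI allI impI)
    fix N
    have "lower_value g 0 \<le> (\<Sum>t<N. \<gamma> ^ t * cost g t) + \<gamma> ^ N * lower_value g N +
                             V_reset * (\<Sum>t<N. \<gamma> ^ Suc t * exit_mass g t)"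
      using lower_value_step[OF assms] gamma_range by (intro discounted_telescope_lower) auto
    moreover have "\<gamma> ^ N * lower_value g N \<le> \<gamma> ^ N * Vmax"
      using lower_value_le_Vmax gamma_range by (intro mult_left_mono) auto
    moreover have "V_reset * (\<Sum>t<N. \<gamma> ^ Suc t * exit_mass g t) \<le> V_reset * \<gamma> ^ k"
      using discounted_exit_mass_le V_bounds[OF mstar_in, of 0] by (intro mult_left_mono) auto
    ultimately show "lower_value g 0 - V_reset * \<gamma> ^ k \<le> (\<Sum>t<N. \<gamma> ^ t * cost g t) + \<gamma> ^ N * Vmax"
      by linarith
  qed
qed

theorem Jcost_greedy_le:
  assumes "gs \<in> strategies" "greedy_strategy gs" "g \<in> strategies"
  shows "Jcost n f P0 PW q h c \<gamma> gs \<le> Jcost n f P0 PW q h c \<gamma> g + Vmax * \<gamma> ^ k"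
  using Jcost_le_upper_value[OF assms(1,2)] lower_value_le_Jcost[OF assms(3)]
    lower_value_0_eq_upper_value_0[of g gs]
  unfolding left_diff_distrib by linarith

end

theorem theorem4:
  fixes n :: nat and S W :: "real set"
    and f :: "real \<Rightarrow> (real \<Rightarrow> real) \<Rightarrow> real \<Rightarrow> real"
    and P0 PW :: "real list pmf" and q \<gamma> cmax \<epsilon> :: real
    and h :: "((real \<Rightarrow> real) \<Rightarrow> real) \<Rightarrow> (real \<Rightarrow> real)"
    and c :: "(real \<Rightarrow> real) \<Rightarrow> (real \<Rightarrow> real) \<Rightarrow> nat \<Rightarrow> real"
    and k :: nat and mstar :: "real \<Rightarrow> real"
    and V :: "(real \<Rightarrow> real) \<Rightarrow> nat \<Rightarrow> real"
    and gs :: strategy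
  assumes n_pos: "n \<ge> 1"
    and S_fin: "finite S" "S \<noteq> {}"
    and W_fin: "finite W" "W \<noteq> {}"
    and f_range: "\<And>s m w. s \<in> S \<Longrightarrow> m \<in> Mset n S \<Longrightarrow> w \<in> W \<Longrightarrow> f s m w \<in> S"
    and P0_supp: "set_pmf P0 \<subseteq> {s. length s = n \<and> set s \<subseteq> S}"
    and PW_supp: "set_pmf PW \<subseteq> {w. length w = n \<and> set w \<subseteq> W}"
    and exchangeable: "\<And>\<pi>. \<pi> permutes {..<n} \<Longrightarrow>
                         map_pmf (\<lambda>w. map (\<lambda>i. w ! \<pi> i) [0..<n]) PW = PW"
    and q_range: "0 \<le> q" "q \<le> 1"
    and gamma_range: "0 < \<gamma>" "\<gamma> < 1"
    and h_range: "\<And>b. is_belief n S b \<Longrightarrow> h b \<in> Mset n S"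
    and c_nonneg: "\<And>m m' a. m \<in> Mset n S \<Longrightarrow> m' \<in> Mset n S \<Longrightarrow> a \<in> {0, 1} \<Longrightarrow> 0 \<le> c m m' a"
    and c_bound: "\<And>m m' a. m \<in> Mset n S \<Longrightarrow> m' \<in> Mset n S \<Longrightarrow> a \<in> {0, 1} \<Longrightarrow> c m m' a \<le> cmax"
    and eps_pos: "\<epsilon> > 0"
    and k_def: "real k \<ge> ln ((1 - \<gamma>) * \<epsilon> / (2 * cmax)) / ln \<gamma>"
    and mstar_in: "mstar \<in> Mset n S"
    and V_sol: "\<And>x y. x \<in> Mset n S \<Longrightarrow> y \<le> k \<Longrightarrow>
                  V x y = min (V0 n S f PW h c \<gamma> k mstar V x y) (V1 n S f PW h c \<gamma> q k mstar V x y)"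
    and gs_strat: "gs \<in> strategies"
    and gs_rule: "\<And>t os as. yof os \<le> k \<Longrightarrow>
                  gs t os as = (if V0 n S f PW h c \<gamma> k mstar V (xof os) (yof os)
                                   \<le> V1 n S f PW h c \<gamma> q k mstar V (xof os) (yof os) then 0 else 1)"
  shows "\<forall>g\<in>strategies. Jcost n f P0 PW q h c \<gamma> gs \<le> Jcost n f P0 PW q h c \<gamma> g + \<epsilon>"
proof -
  interpret truncated_dp n S W f P0 PW q h c \<gamma> cmax k mstar V
    by unfold_locales (use assms in auto)
  have greedy: "greedy_strategy gs" using gs_rule by (simp add: greedy_strategy_def)
  have tail: "Vmax * \<gamma> ^ k \<le> \<epsilon> / 2"
    unfolding Vmax_def using gamma_range cmax_nonneg eps_pos k_def by (rule geometric_tail_le_half)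
  show ?thesis
  proof
    fix g assume "g \<in> strategies"
    then have "Jcost n f P0 PW q h c \<gamma> gs \<le> Jcost n f P0 PW q h c \<gamma> g + Vmax * \<gamma> ^ k"
      by (rule Jcost_greedy_le[OF gs_strat greedy])
    then show "Jcost n f P0 PW q h c \<gamma> gs \<le> Jcost n f P0 PW q h c \<gamma> g + \<epsilon>"
      using tail eps_pos by linarith
  qed
qed

end
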